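(* In the standing setup, let $y_0\in P$ and let $J$ be a $q$-periodic interval of $F_{y_0}$ with midpoint $c$; let $X^*=\{T_0^k(c,y_0)\}_{k=0}^{q-1}$ be the corresponding symmetric periodic orbit of $T_0$. Let $\gamma_A,\gamma_B$ each be one of the curves $y\mapsto(0,y)$, $y\mapsto(\tfrac12,y)$ (type $0$) or $y\mapsto(m_i(y),y)$ for some $i$ (type $-1$), and let $n_A,n_B\ge 0$ be integers; set $j_A=2n_A$ if $\gamma_A$ is of type $0$ and $j_A=2n_A-1$ if of type $-1$, and similarly $j_B$, and assume $|j_A-j_B|=q$. Suppose there are $y_A,y_B\in P$ with $T_0^{n_A}(\gamma_A(y_A))=T_0^{n_B}(\gamma_B(y_B))=p^*\in X^*$; that for $0\le k<n_A$ the index of the elemental subinterval containing the $x$-coordinate of $T_\varepsilon^k(\gamma_A(y))$ is locally constant in $(y,\varepsilon)$ near $(y_A,0)$, and similarly for $B$ near $(y_B,0)$; and that the tangent vectors $\frac{d}{dy}T_0^{n_A}(\gamma_A(y))|_{y=y_A}$ and $\frac{d}{dy}T_0^{n_B}(\gamma_B(y))|_{y=y_B}$ are linearly independent. Then there exist $\varepsilon_0>0$ and a neighborhood $U$ of $p^*$ such that for all $|\varepsilon|<\varepsilon_0$ the curves $y\mapsto T_\varepsilon^{n_A}(\gamma_A(y))$ and $y\mapsto T_\varepsilon^{n_B}(\gamma_B(y))$ (for $y$ near $y_A$, resp. $y_B$) intersect in $U$ in exactly one point $p_\varepsilon$; $p_\varepsilon$ depends continuously on $\varepsilon$ with $p_0=p^*$,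 and $p_\varepsilon$ lies on a symmetric periodic orbit of $T_\varepsilon$ of minimal period $q$.
   Context: Standing setup (perturbed symmetric FIEM): identify $[0,1)$ with $\mathbb{S}^1=\mathbb{R}/\mathbb{Z}$. Fix $d\ge 2$ and an open interval $P\subset\mathbb{R}$. For $y\in P$ let $\lambda(y)=(\lambda_1(y),\dots,\lambda_d(y))$ with $\lambda_i(y)>0$, $\sum_i\lambda_i(y)=1$, each $\lambda_i$ smooth. Put $a_i(y)=\sum_{j<i}\lambda_j(y)$, elemental subintervals $J_i(y)=[a_i(y),a_i(y)+\lambda_i(y))$, midpoints $m_i(y)=a_i(y)+\lambda_i(y)/2$, and $\omega_i(y)=\sum_{j>i}\lambda_j(y)-\sum_{j<i}\lambda_j(y)$ (so $m_i=(1-\omega_i)/2$). The symmetric $d$-IEM is $F_y(x)=x+\omega_i(y)$ for $x\in J_i(y)$. Let $R(x)=-x\bmod 1$ and let $f$ be a smooth $1$-periodic odd function. For $\varepsilon\in\mathbb{R}$, $T_\varepsilon(x,y)=(F_y(x),\,y+\varepsilon f(F_y(x)))$ on $\mathbb{S}^1\times P$ (where defined), $S_\varepsilon(x,y)=(R(x),\,y-\varepsilon f(x))$, and the symmetry lines are $\Gamma_i=\{p: T_\varepsilon^i(S_\varepsilon(p))=p\}$. A $q$-periodic interval of an IEM $F$ is a left-closed right-open interval $J$ such that $q$ is the least positive integer with $F^q(J)=J$, each $F^k(J)$ lies in a single elemental subinterval, and $J$ is maximal with these properties. A periodic orbit $\mathcal{O}$ of $T_\varepsilon$ is symmetric if $S_\varepsilon(\mathcal{O})=\mathcal{O}$.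 *)

theory Defs
  imports "HOL-Analysis.Analysis"
begin

text \<open>Points of the circle S^1 = R/Z are represented by their representative in [0,1).
  Elemental subintervals are indexed by i in {1..d}; lam i y is lambda_i(y).\<close>

definition smooth_on :: "real set \<Rightarrow> (real \<Rightarrow> real) \<Rightarrow> bool" where
  "smooth_on S g \<longleftrightarrow> (\<forall>k. \<forall>x\<in>S. ((deriv ^^ k) g) field_differentiable (at x))"

definition aI :: "(nat \<Rightarrow> real \<Rightarrow> real) \<Rightarrow> nat \<Rightarrow> real \<Rightarrow> real" where
  "aI lam i y = (\<Sum>j\<in>{1..<i}. lam j y)"

definition omegaI :: "(nat \<Rightarrow> real \<Rightarrow> real) \<Rightarrow> nat \<Rightarrow> nat \<Rightarrow> real \<Rightarrow> real" where
  "omegaI lam d i y = (\<Sum>j\<in>{i<..d}. lam j y) - (\<Sum>j\<in>{1..<i}. lam j y)"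

definition midI :: "(nat \<Rightarrow> real \<Rightarrow> real) \<Rightarrow> nat \<Rightarrow> real \<Rightarrow> real" where
  "midI lam i y = aI lam i y + lam i y / 2"

definition elemJ :: "(nat \<Rightarrow> real \<Rightarrow> real) \<Rightarrow> nat \<Rightarrow> real \<Rightarrow> real set" where
  "elemJ lam i y = {aI lam i y ..< aI lam i y + lam i y}"

definition idx :: "(nat \<Rightarrow> real \<Rightarrow> real) \<Rightarrow> nat \<Rightarrow> real \<Rightarrow> real \<Rightarrow> nat" where
  "idx lam d y x = (THE i. i \<in> {1..d} \<and> x \<in> elemJ lam i y)"

definition iem :: "(nat \<Rightarrow> real \<Rightarrow> real) \<Rightarrow> nat \<Rightarrow> real \<Rightarrow> real \<Rightarrow> real" where
  "iem lam d y x = x + omegaI lam d (idx lam d y x) y"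

definition Tmap :: "(nat \<Rightarrow> real \<Rightarrow> real) \<Rightarrow> nat \<Rightarrow> (real \<Rightarrow> real) \<Rightarrow> real
    \<Rightarrow> real \<times> real \<Rightarrow> real \<times> real" where
  "Tmap lam d f eps p = (let x' = iem lam d (snd p) (fst p) in (x', snd p + eps * f x'))"

definition Smap :: "(real \<Rightarrow> real) \<Rightarrow> real \<Rightarrow> real \<times> real \<Rightarrow> real \<times> real" where
  "Smap f eps p = (frac (- fst p), snd p - eps * f (fst p))"

definition per_int_props :: "(nat \<Rightarrow> real \<Rightarrow> real) \<Rightarrow> nat \<Rightarrow> real \<Rightarrow> nat \<Rightarrow> real set \<Rightarrow> bool" where
  "per_int_props lam d y q J \<longleftrightarrow>
     (\<exists>a b. a < b \<and> J = {a..<b}) \<and> 0 < q \<and>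
     (iem lam d y ^^ q) ` J = J \<and>
     (\<forall>k. 0 < k \<and> k < q \<longrightarrow> (iem lam d y ^^ k) ` J \<noteq> J) \<and>
     (\<forall>k. \<exists>i\<in>{1..d}. (iem lam d y ^^ k) ` J \<subseteq> elemJ lam i y)"

definition periodic_interval :: "(nat \<Rightarrow> real \<Rightarrow> real) \<Rightarrow> nat \<Rightarrow> real \<Rightarrow> nat \<Rightarrow> real set \<Rightarrow> bool" where
  "periodic_interval lam d y q J \<longleftrightarrow> per_int_props lam d y q J \<and>
     (\<forall>J'. J \<subset> J' \<longrightarrow> \<not> per_int_props lam d y q J')"

datatype curve = C0 | CHalf | CMid nat

fun gam :: "(nat \<Rightarrow> real \<Rightarrow> real) \<Rightarrow> curve \<Rightarrow> real \<Rightarrow> real \<times> real" where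
  "gam lam C0 y = (0, y)"
| "gam lam CHalf y = (1/2, y)"
| "gam lam (CMid i) y = (midI lam i y, y)"

fun valid_curve :: "nat \<Rightarrow> curve \<Rightarrow> bool" where
  "valid_curve d (CMid i) = (i \<in> {1..d})"
| "valid_curve d _ = True"

fun jval :: "curve \<Rightarrow> nat \<Rightarrow> int" where
  "jval (CMid i) n = 2 * int n - 1"
| "jval _ n = 2 * int n"

text \<open>Embedding of S^1 x R into C x R, giving the topology of the cylinder.\<close>
definition emb :: "real \<times> real \<Rightarrow> complex \<times> real" where
  "emb p = (cis (2 * pi * fst p), snd p)"

definition sym_per_orbit :: "(nat \<Rightarrow> real \<Rightarrow> real) \<Rightarrow> nat \<Rightarrow> (real \<Rightarrow> real) \<Rightarrow> real
    \<Rightarrow> real set \<Rightarrow> nat \<Rightarrow> real \<times> real \<Rightarrow> bool" where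
  "sym_per_orbit lam d f eps P q p \<longleftrightarrow>
     fst p \<in> {0..<1} \<and> 0 < q \<and>
     (Tmap lam d f eps ^^ q) p = p \<and>
     (\<forall>k. 0 < k \<and> k < q \<longrightarrow> (Tmap lam d f eps ^^ k) p \<noteq> p) \<and>
     (\<forall>k<q. snd ((Tmap lam d f eps ^^ k) p) \<in> P) \<and>
     Smap f eps ` {(Tmap lam d f eps ^^ k) p | k. k < q} = {(Tmap lam d f eps ^^ k) p | k. k < q}"

end

theory Submission
  imports Defs
begin

(* The reflection S_eps reverses T_eps on the interior of every elemental interval (T S T = S
   there), so a point lying on two symmetry lines Gamma_jA and Gamma_jB has period |jA - jB| and
   an S-invariant orbit.  For eps = 0 the curves T_0^nA gamma_A and T_0^nB gamma_B meet at p* on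
   such an orbit.  Up to p* their orbits follow the midpoint orbit of the periodic interval (a
   cycle of the injective map F_y0), hence stay in the interiors of elemental intervals; so for
   small eps and nearby parameters the curves are given by smooth branches A(s, eps) and
   B(t, eps).  Transversality and the inverse function theorem applied to
   (s, t, eps) |-> (A(s, eps) - B(t, eps), eps) give a unique intersection point p_eps depending
   continuously on eps; it lies on both symmetry lines, and its minimal period stays q by
   continuity. *)

section \<open>Reversible maps\<close>

text \<open>The symmetry line Gamma_j is T^j (S p) = p; for j = -1 this is written S p = T p, which
  does not require T to be invertible.\<close>

definition on_symmetry_line :: "('a \<Rightarrow> 'a) \<Rightarrow> ('a \<Rightarrow> 'a) \<Rightarrow> int \<Rightarrow> 'a \<Rightarrow> bool" where
  "on_symmetry_line T S j p \<longleftrightarrow> (0 \<le> j \<and> (T ^^ nat j) (S p) = p) \<or> (j = -1 \<and> S p = T p)"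

lemma funpow_reversor:
  assumes "\<And>k. k < m \<Longrightarrow> T (S (T ((T ^^ k) u))) = S ((T ^^ k) u)"
  shows "S u = (T ^^ m) (S ((T ^^ m) u))"
  using assms
proof (induction m)
  case (Suc m)
  have "S u = (T ^^ m) (S ((T ^^ m) u))" using Suc by simp
  also have "S ((T ^^ m) u) = T (S (T ((T ^^ m) u)))" using Suc.prems[of m] by simp
  finally show ?case by (simp add: funpow_swap1)
qed simp

lemma symmetry_lines_period:
  assumes A: "on_symmetry_line T S jA p" and B: "on_symmetry_line T S jB p"
    and jq: "\<bar>jA - jB\<bar> = int q"
  shows "(T ^^ q) p = p"
proof -
  have oriented: "(T ^^ q) p = p" if A: "on_symmetry_line T S jA p" and B: "on_symmetry_line T S jB p"
    and jq: "jA - jB = int q" for jA jB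
  proof (cases "q = 0")
    case False
    then have "0 \<le> jA" and pA: "(T ^^ nat jA) (S p) = p"
      using A B jq by (auto simp: on_symmetry_line_def)
    show ?thesis
    proof (cases "0 \<le> jB")
      case True
      then have "nat jA = q + nat jB" using jq by linarith
      then show ?thesis using pA B True by (simp add: on_symmetry_line_def funpow_add)
    next
      case False
      then have "S p = T p" and "jB = -1" using B by (auto simp: on_symmetry_line_def)
      moreover have "Suc (nat jA) = q" using jq \<open>jB = -1\<close> \<open>0 \<le> jA\<close> by linarith
      ultimately show ?thesis using pA funpow_Suc_right[of "nat jA" T] by simp
    qed
  qed simp
  show ?thesis
  proof (cases "jB \<le> jA")
    case True
    then have "jA - jB = int q" using jq by linarith
    then show ?thesis by (rule oriented[OF A B])
  next
    case False
    then have "jB - jA = int q" using jq by linarith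
    then show ?thesis by (rule oriented[OF B A])
  qed
qed

lemma reversor_maps_orbit_into_orbit:
  assumes q: "0 < q" and per: "(T ^^ q) p = p"
    and reversor: "\<And>k. T (S (T ((T ^^ k) p))) = S ((T ^^ k) p)"
    and line: "on_symmetry_line T S j p"
  shows "S ((T ^^ k) p) \<in> {(T ^^ n) p | n. n < q}"
proof -
  have orbit: "(T ^^ n) p \<in> {(T ^^ n) p | n. n < q}" for n
  proof -
    have "(T ^^ n) p = (T ^^ (n mod q)) p" by (simp add: funpow_mod_eq[OF per])
    then show ?thesis using mod_less_divisor[OF q] by blast
  qed
  have shift: "S ((T ^^ k) p) = (T ^^ m) (S ((T ^^ (m + k)) p))" for k m
  proof -
    have "S ((T ^^ k) p) = (T ^^ m) (S ((T ^^ m) ((T ^^ k) p)))"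
      by (rule funpow_reversor) (metis funpow_add o_apply reversor)
    then show ?thesis by (simp add: funpow_add)
  qed
  have S_periodic: "(T ^^ (q * k)) (S p) = S p" for k
    using shift[of 0 "q * k"] funpow_mod_eq[OF per, of "q * k"] by simp
  have reflect: "S ((T ^^ k) p) = (T ^^ (q * k - k)) (S p)" for k
  proof -
    have "q * k - k + k = q * k" using q by simp
    then show ?thesis using shift[of k "q * k - k"] funpow_mod_eq[OF per, of "q * k"] by simp
  qed
  obtain m0 where m0: "S p = (T ^^ m0) p"
  proof (cases "0 \<le> j")
    case True
    then have pj: "(T ^^ nat j) (S p) = p" using line by (auto simp: on_symmetry_line_def)
    have "q * nat j - nat j + nat j = q * nat j" using q by simp
    then have "(T ^^ (q * nat j - nat j)) ((T ^^ nat j) (S p)) = S p"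
      using S_periodic[of "nat j"] by (metis funpow_add o_apply)
    then show ?thesis using that pj by metis
  next
    case False
    then have "S p = (T ^^ 1) p" using line by (simp add: on_symmetry_line_def)
    then show ?thesis using that by blast
  qed
  have "S ((T ^^ k) p) = (T ^^ (q * k - k)) ((T ^^ m0) p)"
    using reflect[of k] m0 by simp
  also have "\<dots> = (T ^^ (q * k - k + m0)) p" by (simp only: funpow_add o_apply)
  finally show ?thesis by (simp only: orbit)
qed

lemma reversible_orbit_symmetric:
  assumes q: "0 < q" and per: "(T ^^ q) p = p"
    and reversor: "\<And>k. T (S (T ((T ^^ k) p))) = S ((T ^^ k) p)"
    and involution: "\<And>k. S (S ((T ^^ k) p)) = (T ^^ k) p"
    and line: "on_symmetry_line T S j p"
  shows "S ` {(T ^^ k) p | k. k < q} = {(T ^^ k) p | k. k < q}"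
proof -
  let ?O = "{(T ^^ k) p | k. k < q}"
  have into: "S ((T ^^ k) p) \<in> ?O" for k
    by (rule reversor_maps_orbit_into_orbit[OF q per _ line]) (rule reversor)
  then have "S ` ?O \<subseteq> ?O" by blast
  moreover have "?O \<subseteq> S ` ?O"
  proof
    fix z assume "z \<in> ?O"
    then obtain k where "z = (T ^^ k) p" by blast
    then have "z = S (S ((T ^^ k) p))" using involution[of k] by simp
    then show "z \<in> S ` ?O" by (rule rev_image_eqI[OF into])
  qed
  ultimately show ?thesis by blast
qed

lemma funpow_minimal_period_shift:
  assumes per: "(T ^^ q) p = p" and least: "\<And>k. 0 < k \<Longrightarrow> k < q \<Longrightarrow> (T ^^ k) p \<noteq> p"
    and k: "0 < k" "k < q"
  shows "(T ^^ k) ((T ^^ m) p) \<noteq> (T ^^ m) p"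
proof
  assume eq: "(T ^^ k) ((T ^^ m) p) = (T ^^ m) p"
  define r where "r = q - m mod q"
  have "m mod q < q" using k by simp
  moreover have "q * (m div q) + m mod q = m" by (rule mult_div_mod_eq)
  ultimately have "r + m = q * Suc (m div q)" unfolding r_def mult_Suc_right by linarith
  then have "(r + m) mod q = 0" by simp
  have "(T ^^ r) ((T ^^ m) p) = (T ^^ (r + m)) p" by (simp add: funpow_add)
  also have "\<dots> = (T ^^ ((r + m) mod q)) p" by (rule funpow_mod_eq[OF per, symmetric])
  finally have return: "(T ^^ r) ((T ^^ m) p) = p" using \<open>(r + m) mod q = 0\<close> by simp
  have "(T ^^ k) p = (T ^^ k) ((T ^^ r) ((T ^^ m) p))" by (simp only: return)
  also have "\<dots> = (T ^^ r) ((T ^^ k) ((T ^^ m) p))" by (metis comp_apply funpow_add add.commute)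
  also have "\<dots> = p" by (simp only: eq return)
  finally show False using least[OF k] by contradiction
qed

lemma inj_on_funpow_backward_invariant:
  assumes inj: "inj_on F S" and FS: "F ` S \<subseteq> S" and x: "x \<in> S"
    and C: "C \<subseteq> S" "C \<subseteq> F ` C"
    and hit: "(F ^^ n) x \<in> C" and i: "i \<le> n"
  shows "(F ^^ i) x \<in> C"
  using i
proof (induction rule: inc_induct)
  case (step i)
  have "(F ^^ i) x \<in> S" using x FS by (induction i) auto
  moreover obtain c where "c \<in> C" "F c = F ((F ^^ i) x)" using step.IH C(2) by auto
  ultimately show ?case using inj C(1) by (metis inj_onD subsetD)
qed (rule hit)

section \<open>Continuously differentiable maps\<close>

definition C1_on :: "'a::euclidean_space set \<Rightarrow> ('a \<Rightarrow> 'b::real_normed_vector) \<Rightarrow> bool" where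
  "C1_on U g \<longleftrightarrow>
     (\<exists>g'. (\<forall>x\<in>U. (g has_derivative g' x) (at x)) \<and> (\<forall>v. continuous_on U (\<lambda>x. g' x v)))"

lemma C1_on_blinfun:
  assumes "C1_on U g"
  obtains g' where "\<And>x. x \<in> U \<Longrightarrow> (g has_derivative blinfun_apply (g' x)) (at x)"
    and "continuous_on U g'"
proof -
  obtain g' where d: "\<And>x. x \<in> U \<Longrightarrow> (g has_derivative g' x) (at x)"
    and c: "\<And>v. continuous_on U (\<lambda>x. g' x v)"
    using assms by (auto simp: C1_on_def)
  have apply_eq: "blinfun_apply (Blinfun (g' x)) = g' x" if "x \<in> U" for x
    using bounded_linear_Blinfun_apply[OF has_derivative_bounded_linear[OF d[OF that]]] by (simp add: fun_eq_iff)
  show ?thesis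
  proof (rule that[of "\<lambda>x. Blinfun (g' x)"])
    show "(g has_derivative blinfun_apply (Blinfun (g' x))) (at x)" if "x \<in> U" for x
      using d[OF that] apply_eq[OF that] by simp
    show "continuous_on U (\<lambda>x. Blinfun (g' x))"
      by (rule continuous_on_blinfun_componentwise) (use c apply_eq in \<open>simp cong: continuous_on_cong\<close>)
  qed
qed

lemma C1_on_continuous_on: "C1_on U g \<Longrightarrow> continuous_on U g"
  unfolding C1_on_def by (meson continuous_at_imp_continuous_on has_derivative_continuous)

lemma C1_on_const: "C1_on U (\<lambda>x. c)"
  unfolding C1_on_def by (rule exI[of _ "\<lambda>_ _. 0"]) auto

lemma C1_on_linear: "bounded_linear L \<Longrightarrow> C1_on U L"
  unfolding C1_on_def by (rule exI[of _ "\<lambda>_. L"]) (auto simp: bounded_linear_imp_has_derivative)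

lemma C1_on_add: "C1_on U g \<Longrightarrow> C1_on U h \<Longrightarrow> C1_on U (\<lambda>x. g x + h x)"
  unfolding C1_on_def
  by (elim exE conjE, rule_tac x="\<lambda>x v. _ x v + _ x v" in exI)
     (auto intro!: has_derivative_add continuous_on_add)

lemma C1_on_diff: "C1_on U g \<Longrightarrow> C1_on U h \<Longrightarrow> C1_on U (\<lambda>x. g x - h x)"
  unfolding C1_on_def
  by (elim exE conjE, rule_tac x="\<lambda>x v. _ x v - _ x v" in exI)
     (auto intro!: has_derivative_diff continuous_on_diff)

lemma C1_on_sum:
  "finite A \<Longrightarrow> (\<And>j. j \<in> A \<Longrightarrow> C1_on U (g j)) \<Longrightarrow> C1_on U (\<lambda>x. \<Sum>j\<in>A. g j x)"
  by (induction A rule: finite_induct) (auto intro: C1_on_const C1_on_add)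

lemma C1_on_mult:
  fixes g h :: "'a::euclidean_space \<Rightarrow> real"
  assumes "C1_on U g" "C1_on U h"
  shows "C1_on U (\<lambda>x. g x * h x)"
proof -
  have cg: "continuous_on U g" and ch: "continuous_on U h"
    using assms by (auto intro: C1_on_continuous_on)
  obtain g' h' where dg: "\<forall>x\<in>U. (g has_derivative g' x) (at x)" "\<forall>v. continuous_on U (\<lambda>x. g' x v)"
    and dh: "\<forall>x\<in>U. (h has_derivative h' x) (at x)" "\<forall>v. continuous_on U (\<lambda>x. h' x v)"
    using assms by (auto simp: C1_on_def)
  show ?thesis
    unfolding C1_on_def
    by (rule exI[of _ "\<lambda>x v. g x * h' x v + g' x v * h x"])
       (use dg dh cg ch in \<open>auto intro!: has_derivative_mult continuous_intros\<close>)
qed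

lemma C1_on_Pair: "C1_on U g \<Longrightarrow> C1_on U h \<Longrightarrow> C1_on U (\<lambda>x. (g x, h x))"
  unfolding C1_on_def
  by (elim exE conjE, rule_tac x="\<lambda>x v. (_ x v, _ x v)" in exI)
     (auto intro!: has_derivative_Pair continuous_on_Pair)

lemma C1_on_compose_real:
  fixes g :: "'a::euclidean_space \<Rightarrow> real"
  assumes g: "C1_on U g" and gW: "g ` U \<subseteq> W"
    and h: "\<And>y. y \<in> W \<Longrightarrow> (h has_real_derivative h' y) (at y)" and h': "continuous_on W h'"
  shows "C1_on U (\<lambda>x. h (g x))"
proof -
  obtain g' where dg: "\<forall>x\<in>U. (g has_derivative g' x) (at x)" "\<forall>v. continuous_on U (\<lambda>x. g' x v)"
    using g by (auto simp: C1_on_def)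
  have "continuous_on U (\<lambda>x. h' (g x))"
    using continuous_on_compose2[OF h' C1_on_continuous_on[OF g] gW] .
  then have "continuous_on U (\<lambda>x. h' (g x) * g' x v)" for v
    using dg(2) by (intro continuous_intros) auto
  moreover have "((\<lambda>x. h (g x)) has_derivative (\<lambda>v. h' (g x) * g' x v)) (at x)" if "x \<in> U" for x
  proof -
    have "(h has_derivative (\<lambda>t. h' (g x) * t)) (at (g x))"
      using h[of "g x"] gW that by (auto simp: has_field_derivative_def)
    then show ?thesis using has_derivative_compose[of g "g' x" x UNIV h] dg(1) that by simp
  qed
  ultimately show ?thesis
    unfolding C1_on_def by (intro exI[of _ "\<lambda>x v. h' (g x) * g' x v"]) blast
qed

lemma C1_on_compose_linear:
  assumes g: "C1_on V g" and L: "bounded_linear L" and LU: "L ` U \<subseteq> V"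
  shows "C1_on U (\<lambda>x. g (L x))"
proof -
  obtain g' where dg: "\<forall>y\<in>V. (g has_derivative g' y) (at y)" "\<forall>v. continuous_on V (\<lambda>y. g' y v)"
    using g by (auto simp: C1_on_def)
  have "continuous_on U L" using L linear_continuous_on by blast
  then have "continuous_on U (\<lambda>x. g' (L x) (L v))" for v
    using continuous_on_compose2[OF dg(2)[rule_format, of "L v"] _ LU] by blast
  moreover have "((\<lambda>x. g (L x)) has_derivative (\<lambda>v. g' (L x) (L v))) (at x)" if "x \<in> U" for x
    using has_derivative_compose[OF bounded_linear_imp_has_derivative[OF L] dg(1)[rule_format, of "L x"]]
      LU that by auto
  ultimately show ?thesis
    unfolding C1_on_def by (intro exI[of _ "\<lambda>x v. g' (L x) (L v)"]) blast
qed

lemma C1_on_linear_compose: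
  assumes g: "C1_on U g" and L: "bounded_linear L"
  shows "C1_on U (\<lambda>x. L (g x))"
proof -
  obtain g' where dg: "\<forall>x\<in>U. (g has_derivative g' x) (at x)" "\<forall>v. continuous_on U (\<lambda>x. g' x v)"
    using g by (auto simp: C1_on_def)
  have "continuous_on U (\<lambda>x. L (g' x v))" for v
    using continuous_on_compose2[OF linear_continuous_on[OF L] dg(2)[rule_format, of v]] by blast
  moreover have "((\<lambda>x. L (g x)) has_derivative (\<lambda>v. L (g' x v))) (at x)" if "x \<in> U" for x
    using has_derivative_compose[OF dg(1)[rule_format, OF that] bounded_linear_imp_has_derivative[OF L]] .
  ultimately show ?thesis
    unfolding C1_on_def by (intro exI[of _ "\<lambda>x v. L (g' x v)"]) blast
qed

lemma smooth_on_C1: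
  assumes "smooth_on S g"
  shows "\<And>x. x \<in> S \<Longrightarrow> (g has_real_derivative deriv g x) (at x)"
    and "continuous_on S (deriv g)"
proof -
  have "\<forall>x\<in>S. ((deriv ^^ k) g) field_differentiable (at x)" for k
    using assms unfolding smooth_on_def by blast
  from this[of 0] this[of 1]
  have "\<forall>x\<in>S. g field_differentiable (at x)" "\<forall>x\<in>S. deriv g field_differentiable (at x)"
    by simp_all
  then show "\<And>x. x \<in> S \<Longrightarrow> (g has_real_derivative deriv g x) (at x)" "continuous_on S (deriv g)"
    by (auto simp: DERIV_deriv_iff_field_differentiable
        intro!: continuous_at_imp_continuous_on field_differentiable_imp_continuous_at)
qed

lemma has_vector_derivative_slice:
  assumes g: "(g has_vector_derivative v) (at s0)" and U: "open U" "(s0, 0) \<in> U"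
    and eq: "\<And>s. (s, 0) \<in> U \<Longrightarrow> \<Gamma> (s, 0) = g s"
  shows "((\<lambda>s. \<Gamma> (s, 0)) has_vector_derivative v) (at s0)"
proof -
  have "open ((\<lambda>s. (s, 0::'b)) -` U)"
    using U(1) by (intro continuous_open_vimage) (auto intro: continuous_intros)
  moreover have "s0 \<in> (\<lambda>s. (s, 0)) -` U" using U(2) by simp
  ultimately show ?thesis
    by (rule has_vector_derivative_transform_within_open[OF g]) (simp add: eq)
qed

section \<open>Persistence of a transversal intersection\<close>

lemma has_derivative_chain_unique:
  assumes "(G has_derivative L) (at (\<phi> t0))" and "(\<phi> has_derivative \<phi>') (at t0)"
    and "((\<lambda>t. G (\<phi> t)) has_derivative \<Psi>') (at t0)"
  shows "L (\<phi>' h) = \<Psi>' h"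
proof -
  have "((\<lambda>t. G (\<phi> t)) has_derivative (\<lambda>h. L (\<phi>' h))) (at t0)"
    using has_derivative_compose[OF assms(2,1)] .
  then show ?thesis using has_derivative_unique[OF _ assms(3)] by metis
qed

lemma linear_inj_of_transversal_columns:
  fixes L :: "(real \<times> real) \<times> real \<Rightarrow> (real \<times> real) \<times> real"
  assumes lin: "linear L"
    and colA: "\<And>h. L ((h, 0), 0) = (h *\<^sub>R vA, 0)"
    and colB: "\<And>h. L ((0, h), 0) = (- (h *\<^sub>R vB), 0)"
    and last: "\<And>w. snd (L w) = snd w"
    and transversal: "fst vA * snd vB - snd vA * fst vB \<noteq> 0"
  shows "inj L"
  unfolding linear_inj_iff_eq_0[OF lin]
proof (intro allI impI)
  fix w :: "(real \<times> real) \<times> real" assume w0: "L w = 0"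
  obtain h1 h2 h3 where w: "w = ((h1, h2), h3)" by (metis prod.collapse)
  have "h3 = 0" using last[of w] w0 w by simp
  then have "L w = L ((h1, 0), 0) + L ((0, h2), 0)"
    using w linear_add[OF lin, of "((h1, 0), 0)" "((0, h2), 0)"] by simp
  then have "h1 *\<^sub>R vA - h2 *\<^sub>R vB = 0" using w0 colA colB by (simp add: zero_prod_def)
  then have e1: "h1 * fst vA - h2 * fst vB = 0" and e2: "h1 * snd vA - h2 * snd vB = 0"
    by (auto simp: prod_eq_iff)
  have "h1 * (fst vA * snd vB - snd vA * fst vB)
        = snd vB * (h1 * fst vA - h2 * fst vB) - fst vB * (h1 * snd vA - h2 * snd vB)"
    by (simp add: algebra_simps)
  then have "h1 = 0" using e1 e2 transversal by simp
  have "h2 * (fst vA * snd vB - snd vA * fst vB)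
        = snd vA * (h1 * fst vA - h2 * fst vB) - fst vA * (h1 * snd vA - h2 * snd vB)"
    by (simp add: algebra_simps)
  then have "h2 = 0" using e1 e2 transversal by simp
  show "w = 0" using w \<open>h1 = 0\<close> \<open>h2 = 0\<close> \<open>h3 = 0\<close> by (simp add: zero_prod_def)
qed

definition intersection_map :: "(real \<times> real \<Rightarrow> real \<times> real) \<Rightarrow> (real \<times> real \<Rightarrow> real \<times> real)
    \<Rightarrow> (real \<times> real) \<times> real \<Rightarrow> (real \<times> real) \<times> real" where
  "intersection_map A B z = (A (fst (fst z), snd z) - B (snd (fst z), snd z), snd z)"

lemma intersection_map_derivative_inj:
  assumes dG: "(intersection_map A B has_derivative L) (at ((sA, sB), 0))"
    and dA: "((\<lambda>s. A (s, 0)) has_vector_derivative vA) (at sA)"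
    and dB: "((\<lambda>t. B (t, 0)) has_vector_derivative vB) (at sB)"
    and transversal: "fst vA * snd vB - snd vA * fst vB \<noteq> 0"
  shows "inj L"
proof (rule linear_inj_of_transversal_columns[OF has_derivative_linear[OF dG] _ _ _ transversal])
  have line: "((\<lambda>s. ((s, sB), 0::real)) has_derivative (\<lambda>h. ((h, 0), 0))) (at sA)"
    by (intro derivative_intros)
  have "((\<lambda>s. intersection_map A B ((s, sB), 0)) has_derivative (\<lambda>h. (h *\<^sub>R vA, 0))) (at sA)"
    using dA unfolding has_vector_derivative_def intersection_map_def by (auto intro!: derivative_eq_intros)
  from has_derivative_chain_unique[OF _ line this] dG show "L ((h, 0), 0) = (h *\<^sub>R vA, 0)" for h
    by simp
next
  have line: "((\<lambda>t. ((sA, t), 0::real)) has_derivative (\<lambda>h. ((0, h), 0))) (at sB)"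
    by (intro derivative_intros)
  have "((\<lambda>t. intersection_map A B ((sA, t), 0)) has_derivative (\<lambda>h. (- (h *\<^sub>R vB), 0))) (at sB)"
    using dB unfolding has_vector_derivative_def intersection_map_def by (auto intro!: derivative_eq_intros)
  from has_derivative_chain_unique[OF _ line this] dG show "L ((0, h), 0) = (- (h *\<^sub>R vB), 0)" for h
    by simp
next
  have "((\<lambda>z. snd (intersection_map A B z)) has_derivative (\<lambda>w. snd (L w))) (at ((sA, sB), 0))"
    using dG by (rule has_derivative_snd)
  moreover have "((\<lambda>z. snd (intersection_map A B z)) has_derivative snd) (at ((sA, sB), 0))"
    by (simp add: intersection_map_def bounded_linear_imp_has_derivative bounded_linear_snd)
  ultimately have "(\<lambda>w. snd (L w)) = snd" by (rule has_derivative_unique)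
  then show "snd (L w) = snd w" for w by (metis (no_types))
qed

lemma inj_blinfun_left_inverse:
  fixes L :: "'a::euclidean_space \<Rightarrow>\<^sub>L 'a"
  assumes "inj (blinfun_apply L)"
  obtains L' where "L' o\<^sub>L L = id_blinfun"
proof -
  obtain g where g: "linear g" "g \<circ> blinfun_apply L = id"
    using linear_injective_left_inverse[OF bounded_linear.linear[OF blinfun.bounded_linear_right] assms] by blast
  have "blinfun_apply (Blinfun g o\<^sub>L L) x = blinfun_apply id_blinfun x" for x
    using g by (simp add: bounded_linear_Blinfun_apply linear_conv_bounded_linear pointfree_idE)
  then show ?thesis using that blinfun_eqI by blast
qed

lemma dist_triple_lt:
  fixes s t e :: real
  assumes "\<bar>s - sA\<bar> < eta" "\<bar>t - sB\<bar> < eta" "\<bar>e\<bar> < eta"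
  shows "dist ((s, t), e) ((sA, sB), 0) < 3 * eta"
proof -
  have "dist ((s, t), e) ((sA, sB), 0) = norm ((s - sA, t - sB), e)" by (simp add: dist_norm)
  also have "\<dots> \<le> norm (s - sA, t - sB) + norm e" by (rule norm_Pair_le)
  also have "norm (s - sA, t - sB) \<le> norm (s - sA) + norm (t - sB)" by (rule norm_Pair_le)
  finally show ?thesis using assms by simp
qed

lemma intersection_map_local_inverse:
  assumes UA: "open UA" "(sA, 0) \<in> UA" and A: "C1_on UA A"
    and UB: "open UB" "(sB, 0) \<in> UB" and B: "C1_on UB B"
    and dA: "((\<lambda>s. A (s, 0)) has_vector_derivative vA) (at sA)"
    and dB: "((\<lambda>t. B (t, 0)) has_vector_derivative vB) (at sB)"
    and transversal: "fst vA * snd vB - snd vA * fst vB \<noteq> 0"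
  obtains U' V g where "open U'" "((sA, sB), 0) \<in> U'" "open V" "homeomorphism U' V (intersection_map A B) g"
    "\<And>s t e. ((s, t), e) \<in> U' \<Longrightarrow> (s, e) \<in> UA \<and> (t, e) \<in> UB"
proof -
  define U where "U = (\<lambda>z. (fst (fst z), snd z)) -` UA \<inter> (\<lambda>z. (snd (fst z), snd z)) -` UB"
  have "open U"
    unfolding U_def using UA(1) UB(1)
    by (intro open_Int continuous_open_vimage)
       (simp_all add: continuous_at_imp_continuous_on linear_continuous_at bounded_linear_intros)
  moreover have "((sA, sB), 0) \<in> U" using UA(2) UB(2) by (simp add: U_def)
  ultimately have U: "open U" "((sA, sB), 0) \<in> U" by blast+
  have "C1_on U (intersection_map A B)"
    unfolding intersection_map_def using bounded_linear_fst bounded_linear_snd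
    by (intro C1_on_Pair C1_on_diff C1_on_linear C1_on_compose_linear[OF A] C1_on_compose_linear[OF B])
       (auto simp: U_def intro: bounded_linear_intros)
  then obtain G' where dG: "\<And>z. z \<in> U \<Longrightarrow> (intersection_map A B has_derivative blinfun_apply (G' z)) (at z)"
    and cG: "continuous_on U G'" using C1_on_blinfun by blast
  have "inj (blinfun_apply (G' ((sA, sB), 0)))"
    by (rule intersection_map_derivative_inj[OF dG[OF U(2)] dA dB transversal])
  then obtain invG where invG: "invG o\<^sub>L G' ((sA, sB), 0) = id_blinfun" by (rule inj_blinfun_left_inverse)
  obtain U' V g where U': "open U'" "U' \<subseteq> U" "((sA, sB), 0) \<in> U'" and V: "open V"
    and hom: "homeomorphism U' V (intersection_map A B) g"
    by (rule inverse_function_theorem[OF U(1) _ cG U(2) invG]) (erule dG, rule that)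
  show ?thesis
  proof (rule that[OF U'(1) U'(3) V hom])
    fix s t e assume "((s, t), e) \<in> U'"
    then show "(s, e) \<in> UA \<and> (t, e) \<in> UB" using U'(2) unfolding U_def by auto
  qed
qed

lemma transversal_intersection_persists:
  fixes A B :: "real \<times> real \<Rightarrow> real \<times> real"
  assumes UA: "open UA" "(sA, 0) \<in> UA" and A: "C1_on UA A"
    and UB: "open UB" "(sB, 0) \<in> UB" and B: "C1_on UB B"
    and meet: "A (sA, 0) = B (sB, 0)"
    and dA: "((\<lambda>s. A (s, 0)) has_vector_derivative vA) (at sA)"
    and dB: "((\<lambda>t. B (t, 0)) has_vector_derivative vB) (at sB)"
    and transversal: "fst vA * snd vB - snd vA * fst vB \<noteq> 0"
  obtains eps0 eta \<sigma> where "0 < eps0" "eps0 \<le> eta"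
    "\<And>s e. \<bar>s - sA\<bar> < eta \<Longrightarrow> \<bar>e\<bar> < eta \<Longrightarrow> (s, e) \<in> UA"
    "\<And>t e. \<bar>t - sB\<bar> < eta \<Longrightarrow> \<bar>e\<bar> < eta \<Longrightarrow> (t, e) \<in> UB"
    "\<sigma> 0 = sA" "continuous_on {-eps0<..<eps0} \<sigma>"
    "\<And>e. \<bar>e\<bar> < eps0 \<Longrightarrow>
       \<bar>\<sigma> e - sA\<bar> < eta \<and> (\<exists>t. \<bar>t - sB\<bar> < eta \<and> A (\<sigma> e, e) = B (t, e))"
    "\<And>e s t. \<bar>e\<bar> < eps0 \<Longrightarrow> \<bar>s - sA\<bar> < eta \<Longrightarrow> \<bar>t - sB\<bar> < eta \<Longrightarrow>
       A (s, e) = B (t, e) \<Longrightarrow> s = \<sigma> e"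
proof -
  let ?G = "intersection_map A B" and ?z0 = "((sA, sB), 0::real)"
  obtain U' V g where U': "open U'" "?z0 \<in> U'" and V: "open V" and hom: "homeomorphism U' V ?G g"
    and inUAB: "\<And>s t e. ((s, t), e) \<in> U' \<Longrightarrow> (s, e) \<in> UA \<and> (t, e) \<in> UB"
    by (rule intersection_map_local_inverse[OF UA A UB B dA dB transversal]) (rule that; assumption)
  have gG: "\<And>z. z \<in> U' \<Longrightarrow> g (?G z) = z" and Gg: "\<And>w. w \<in> V \<Longrightarrow> ?G (g w) = w"
    and gV: "g ` V = U'" and cg: "continuous_on V g"
    using homeomorphism_apply1[OF hom] homeomorphism_apply2[OF hom] homeomorphism_image2[OF hom]
      homeomorphism_cont2[OF hom] by auto
  obtain \<delta> where "\<delta> > 0" and \<delta>: "ball ?z0 \<delta> \<subseteq> U'" using U' open_contains_ball by blast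
  define eta where "eta = \<delta> / 3"
  have eta: "eta > 0" using \<open>\<delta> > 0\<close> by (simp add: eta_def)
  have box: "((s, t), e) \<in> U'" if "\<bar>s - sA\<bar> < eta" "\<bar>t - sB\<bar> < eta" "\<bar>e\<bar> < eta" for s t e
  proof -
    have "dist ?z0 ((s, t), e) < \<delta>" using dist_triple_lt[OF that] by (simp add: eta_def dist_commute)
    then show ?thesis using \<delta> by auto
  qed
  define line :: "real \<Rightarrow> (real \<times> real) \<times> real" where "line e = ((0, 0), e)" for e
  have Gz0: "?G ?z0 = line 0" using meet by (simp add: intersection_map_def line_def zero_prod_def)
  have V0: "line 0 \<in> V" using homeomorphism_image1[OF hom] U'(2) Gz0 by force
  have cline: "continuous_on S line" for S by (unfold line_def) (intro continuous_intros)
  have tline: "(line \<longlongrightarrow> line 0) (nhds 0)"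
    unfolding line_def by (intro tendsto_intros filterlim_ident)
  have "isCont g (line 0)" using cg V V0 continuous_on_eq_continuous_at by blast
  from isCont_tendsto_compose[OF this tline] have tg: "((\<lambda>e. g (line e)) \<longlongrightarrow> ?z0) (nhds 0)"
    using gG[OF U'(2)] Gz0 by simp
  have "eventually (\<lambda>e. line e \<in> V \<and> dist (g (line e)) ?z0 < eta) (nhds 0)"
    using topological_tendstoD[OF tline V V0] tendstoD[OF tg eta] by eventually_elim auto
  then obtain eps1 where "eps1 > 0"
    and eps1: "\<And>e. \<bar>e\<bar> < eps1 \<Longrightarrow> line e \<in> V \<and> dist (g (line e)) ?z0 < eta"
    unfolding eventually_nhds_metric dist_real_def by auto
  define eps0 where "eps0 = min eps1 eta"
  define \<sigma> where "\<sigma> e = fst (fst (g (line e)))" for e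
  show ?thesis
  proof (rule that[of eps0 eta \<sigma>])
    show "0 < eps0" "eps0 \<le> eta" using \<open>eps1 > 0\<close> eta by (auto simp: eps0_def)
    show "(s, e) \<in> UA" if "\<bar>s - sA\<bar> < eta" "\<bar>e\<bar> < eta" for s e
      using inUAB box[OF that(1) _ that(2), of sB] eta by auto
    show "(t, e) \<in> UB" if "\<bar>t - sB\<bar> < eta" "\<bar>e\<bar> < eta" for t e
      using inUAB box[OF _ that(1) that(2), of sA] eta by auto
    show "\<sigma> 0 = sA" using gG[OF U'(2)] Gz0 by (simp add: \<sigma>_def)
    have "line ` {-eps0<..<eps0} \<subseteq> V" using eps1 by (auto simp: eps0_def)
    then have "continuous_on {-eps0<..<eps0} (\<lambda>e. g (line e))"
      using continuous_on_compose2[OF cg cline] by blast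
    then show "continuous_on {-eps0<..<eps0} \<sigma>"
      unfolding \<sigma>_def by (intro continuous_on_fst)
    show "\<bar>\<sigma> e - sA\<bar> < eta \<and> (\<exists>t. \<bar>t - sB\<bar> < eta \<and> A (\<sigma> e, e) = B (t, e))"
      if "\<bar>e\<bar> < eps0" for e
    proof -
      obtain s t e' where z: "g (line e) = ((s, t), e')" by (metis prod.collapse)
      have "line e \<in> V" "dist (g (line e)) ?z0 < eta" using eps1[of e] that by (auto simp: eps0_def)
      then have "?G ((s, t), e') = line e" "dist (s, t) (sA, sB) < eta"
        using Gg z dist_fst_le[of "((s, t), e')" ?z0] by fastforce+
      then have "e' = e" "A (s, e) = B (t, e)" "\<bar>s - sA\<bar> < eta" "\<bar>t - sB\<bar> < eta"
        using dist_fst_le[of "(s, t)" "(sA, sB)"] dist_snd_le[of "(s, t)" "(sA, sB)"]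
        by (auto simp: intersection_map_def line_def dist_real_def simp flip: zero_prod_def)
      then show ?thesis using z unfolding \<sigma>_def by auto
    qed
    show "s = \<sigma> e"
      if "\<bar>e\<bar> < eps0" "\<bar>s - sA\<bar> < eta" "\<bar>t - sB\<bar> < eta" "A (s, e) = B (t, e)" for e s t
    proof -
      have "?G ((s, t), e) = line e" using that(4) by (simp add: intersection_map_def line_def zero_prod_def)
      moreover have "((s, t), e) \<in> U'" using box that by (simp add: eps0_def)
      ultimately have "g (line e) = ((s, t), e)" using gG by metis
      then show ?thesis by (simp add: \<sigma>_def)
    qed
  qed
qed

section \<open>The symmetric interval exchange and its perturbation\<close>

definition elemJ_interior :: "(nat \<Rightarrow> real \<Rightarrow> real) \<Rightarrow> nat \<Rightarrow> real \<Rightarrow> real set" where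
  "elemJ_interior lam i y = {aI lam i y <..< aI lam i y + lam i y}"

lemma elemJ_interior_subset: "elemJ_interior lam i y \<subseteq> elemJ lam i y"
  by (auto simp: elemJ_interior_def elemJ_def)

lemma frac_uminus_unit:
  assumes "0 \<le> x" "x < 1"
  shows "frac (- x) = (if x = 0 then 0 else 1 - x)"
proof (cases "x = 0")
  case False
  then have "floor (- x) = -1" using assms by (simp add: floor_eq_iff)
  then show ?thesis using False by (simp add: frac_def)
qed simp

text \<open>The affine branch of T_eps on the elemental interval J_i; unlike Tmap it is smooth in
  (x, y, eps).\<close>

definition Tbranch :: "(nat \<Rightarrow> real \<Rightarrow> real) \<Rightarrow> nat \<Rightarrow> (real \<Rightarrow> real) \<Rightarrow> nat \<Rightarrow> real
    \<Rightarrow> real \<times> real \<Rightarrow> real \<times> real" where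
  "Tbranch lam d f i e p = (let x' = fst p + omegaI lam d i (snd p) in (x', snd p + e * f x'))"

primrec itinerary_orbit :: "(nat \<Rightarrow> real \<Rightarrow> real) \<Rightarrow> nat \<Rightarrow> (real \<Rightarrow> real) \<Rightarrow> (nat \<Rightarrow> nat) \<Rightarrow> curve
    \<Rightarrow> real \<Rightarrow> real \<Rightarrow> nat \<Rightarrow> real \<times> real" where
  "itinerary_orbit lam d f ix cv s e 0 = gam lam cv s"
| "itinerary_orbit lam d f ix cv s e (Suc k) = Tbranch lam d f (ix k) e (itinerary_orbit lam d f ix cv s e k)"

locale symmetric_fiem =
  fixes lam :: "nat \<Rightarrow> real \<Rightarrow> real" and d :: nat and P :: "real set" and f :: "real \<Rightarrow> real"
  assumes P_open: "open P"
    and lam_pos: "\<And>i y. i \<in> {1..d} \<Longrightarrow> y \<in> P \<Longrightarrow> lam i y > 0"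
    and lam_sum: "\<And>y. y \<in> P \<Longrightarrow> (\<Sum>i\<in>{1..d}. lam i y) = 1"
    and lam_smooth: "\<And>i. i \<in> {1..d} \<Longrightarrow> smooth_on P (lam i)"
    and f_smooth: "smooth_on UNIV f"
    and f_per: "\<And>x. f (x + 1) = f x"
    and f_odd: "\<And>x. f (- x) = - f x"
begin

lemma aI_add_lam_add_tail:
  assumes i: "i \<in> {1..d}" and y: "y \<in> P"
  shows "aI lam i y + lam i y + (\<Sum>j\<in>{i<..d}. lam j y) = 1"
proof -
  have split: "{1..d} = {1..<i} \<union> ({i} \<union> {i<..d})" using i by auto
  have "(\<Sum>j\<in>{1..d}. lam j y) = (\<Sum>j\<in>{1..<i}. lam j y) + (\<Sum>j\<in>{i} \<union> {i<..d}. lam j y)"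
    unfolding split by (rule sum.union_disjoint) auto
  then have "(\<Sum>j\<in>{1..d}. lam j y) = (\<Sum>j\<in>{1..<i}. lam j y) + (lam i y + (\<Sum>j\<in>{i<..d}. lam j y))"
    by simp
  then show ?thesis using lam_sum[OF y] by (simp add: aI_def)
qed

lemma aI_nonneg: "y \<in> P \<Longrightarrow> i \<le> Suc d \<Longrightarrow> 0 \<le> aI lam i y"
  unfolding aI_def by (rule sum_nonneg) (auto intro!: less_imp_le lam_pos)

lemma aI_add_lam_le_1: "i \<in> {1..d} \<Longrightarrow> y \<in> P \<Longrightarrow> aI lam i y + lam i y \<le> 1"
  using aI_add_lam_add_tail[of i y] sum_nonneg[of "{i<..d}" "\<lambda>j. lam j y"] lam_pos[of _ y]
  by (fastforce intro: less_imp_le)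

lemma aI_add_lam_le_aI:
  assumes "i \<in> {1..d}" "j \<in> {1..d}" "i < j" "y \<in> P"
  shows "aI lam i y + lam i y \<le> aI lam j y"
proof -
  have "aI lam i y + lam i y = (\<Sum>k\<in>{1..<Suc i}. lam k y)"
    using assms by (simp add: aI_def)
  also have "\<dots> \<le> (\<Sum>k\<in>{1..<j}. lam k y)"
    using assms by (intro sum_mono2) (auto intro!: less_imp_le lam_pos)
  finally show ?thesis by (simp add: aI_def)
qed

lemma omegaI_eq: "i \<in> {1..d} \<Longrightarrow> y \<in> P \<Longrightarrow> omegaI lam d i y = 1 - 2 * aI lam i y - lam i y"
  using aI_add_lam_add_tail[of i y] by (simp add: omegaI_def aI_def)

lemma elemJ_disjoint:
  assumes "i \<in> {1..d}" "j \<in> {1..d}" "y \<in> P" "x \<in> elemJ lam i y" "x \<in> elemJ lam j y"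
  shows "i = j"
  using aI_add_lam_le_aI[of i j y] aI_add_lam_le_aI[of j i y] assms
  by (cases i j rule: linorder_cases) (auto simp: elemJ_def)

lemma idx_eq: "i \<in> {1..d} \<Longrightarrow> y \<in> P \<Longrightarrow> x \<in> elemJ lam i y \<Longrightarrow> idx lam d y x = i"
  unfolding idx_def by (rule the_equality) (auto intro: elemJ_disjoint)

lemma iem_eq: "i \<in> {1..d} \<Longrightarrow> y \<in> P \<Longrightarrow> x \<in> elemJ lam i y \<Longrightarrow> iem lam d y x = x + omegaI lam d i y"
  by (simp add: iem_def idx_eq)

lemma iem_elemJ_bounds:
  assumes "i \<in> {1..d}" "y \<in> P" "x \<in> elemJ lam i y"
  shows "1 - aI lam i y - lam i y \<le> iem lam d y x \<and> iem lam d y x < 1 - aI lam i y"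
  using assms iem_eq[OF assms] omegaI_eq[OF assms(1,2)] by (auto simp: elemJ_def)

lemma elemJ_subset_unit: "i \<in> {1..d} \<Longrightarrow> y \<in> P \<Longrightarrow> elemJ lam i y \<subseteq> {0..<1}"
  using aI_nonneg[of y i] aI_add_lam_le_1[of i y] by (auto simp: elemJ_def)

lemma unit_covered_by_elemJ:
  assumes y: "y \<in> P" and x: "0 \<le> x" "x < 1"
  obtains i where "i \<in> {1..d}" "x \<in> elemJ lam i y"
proof -
  define S where "S = {j\<in>{1..d}. aI lam j y \<le> x}"
  have "d \<noteq> 0"
  proof
    assume "d = 0"
    then show False using lam_sum[OF y] by simp
  qed
  then have "1 \<in> S" using x by (simp add: S_def aI_def)
  moreover have "finite S" by (simp add: S_def)
  ultimately have "Max S \<in> S" using Max_in by blast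
  then have i: "Max S \<in> {1..d}" and ax: "aI lam (Max S) y \<le> x"
    unfolding S_def by blast+
  have "x < aI lam (Max S) y + lam (Max S) y"
  proof (cases "Max S = d")
    case True
    then show ?thesis using aI_add_lam_add_tail[OF i y] x by simp
  next
    case False
    then have "Suc (Max S) \<in> {1..d}" using i by auto
    moreover have "Suc (Max S) \<notin> S" using Max_ge[OF \<open>finite S\<close>, of "Suc (Max S)"] by auto
    ultimately have "x < aI lam (Suc (Max S)) y" by (auto simp: S_def)
    then show ?thesis using i by (simp add: aI_def)
  qed
  then show ?thesis using that i ax by (auto simp: elemJ_def)
qed

lemma iem_maps_unit:
  assumes "y \<in> P" "x \<in> {0..<1}"
  shows "iem lam d y x \<in> {0..<1}"
proof -
  obtain i where i: "i \<in> {1..d}" "x \<in> elemJ lam i y"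
    using unit_covered_by_elemJ[OF assms(1)] assms(2) by auto
  then show ?thesis
    using iem_elemJ_bounds[OF i(1) assms(1) i(2)] aI_add_lam_le_1[OF i(1) assms(1)]
      aI_nonneg[of y i] lam_pos[OF i(1) assms(1)] assms(1) by auto
qed

lemma iem_inj_on_unit:
  assumes y: "y \<in> P"
  shows "inj_on (iem lam d y) {0..<1}"
proof (rule inj_onI)
  fix x x' assume "x \<in> {0..<1}" "x' \<in> {0..<1}" and eq: "iem lam d y x = iem lam d y x'"
  then obtain i j where i: "i \<in> {1..d}" "x \<in> elemJ lam i y" and j: "j \<in> {1..d}" "x' \<in> elemJ lam j y"
    using unit_covered_by_elemJ[OF y] by (metis atLeastLessThan_iff)
  have "i = j"
  proof (rule ccontr)
    assume "i \<noteq> j"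
    then show False
      using aI_add_lam_le_aI[OF i(1) j(1) _ y] aI_add_lam_le_aI[OF j(1) i(1) _ y]
        iem_elemJ_bounds[OF i(1) y i(2)] iem_elemJ_bounds[OF j(1) y j(2)] eq
      by (cases i j rule: linorder_cases) auto
  qed
  then show "x = x'" using eq iem_eq[OF i(1) y i(2)] iem_eq[OF j(1) y j(2)] by simp
qed

lemma Tmap_Pair: "Tmap lam d f e (x, y) = (iem lam d y x, y + e * f (iem lam d y x))"
  by (simp add: Tmap_def Let_def)

lemma Tmap_zero_funpow: "(Tmap lam d f 0 ^^ k) (x, y) = ((iem lam d y ^^ k) x, y)"
  by (induction k) (auto simp: Tmap_Pair)

text \<open>Near a regular point T_eps coincides with a smooth branch.\<close>

definition regular :: "real \<times> real \<Rightarrow> bool" where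
  "regular p \<longleftrightarrow> snd p \<in> P \<and> (\<exists>i\<in>{1..d}. fst p \<in> elemJ_interior lam i (snd p))"

lemma regular_unit: "regular p \<Longrightarrow> fst p \<in> {0..<1}"
  unfolding regular_def using elemJ_interior_subset elemJ_subset_unit by blast

lemma Tmap_eq_Tbranch:
  "i \<in> {1..d} \<Longrightarrow> y \<in> P \<Longrightarrow> x \<in> elemJ lam i y \<Longrightarrow> Tmap lam d f e (x, y) = Tbranch lam d f i e (x, y)"
  by (simp add: Tmap_Pair Tbranch_def iem_eq Let_def)

lemma Smap_Pair: "Smap f e (x, y) = (frac (- x), y - e * f x)"
  by (simp add: Smap_def)

lemma f_zero: "f 0 = 0"
  using f_odd[of 0] by simp

lemma f_one_minus: "f (1 - x) = - f x"
  using f_per[of "-x"] f_odd[of x] by simp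

lemma f_half: "f (1/2) = 0"
  using f_one_minus[of "1/2"] by simp

lemma Smap_involutive:
  assumes "fst p \<in> {0..<1}"
  shows "Smap f e (Smap f e p) = p"
proof (cases p)
  case (Pair x y)
  show ?thesis
  proof (cases "x = 0")
    case True
    then show ?thesis using Pair by (simp add: Smap_Pair f_zero)
  next
    case False
    then have "frac (- x) = 1 - x" "frac (- (1 - x)) = x"
      using frac_uminus_unit[of x] frac_uminus_unit[of "1 - x"] assms Pair by auto
    then show ?thesis using Pair by (simp add: Smap_Pair f_one_minus)
  qed
qed

lemma Smap_gam_C0: "Smap f e (gam lam C0 s) = gam lam C0 s"
  by (simp add: Smap_Pair f_zero)

lemma Smap_gam_CHalf: "Smap f e (gam lam CHalf s) = gam lam CHalf s"
  using frac_uminus_unit[of "1/2"] by (simp add: Smap_Pair f_half)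

lemma midI_in_interior: "i \<in> {1..d} \<Longrightarrow> s \<in> P \<Longrightarrow> midI lam i s \<in> elemJ_interior lam i s"
  using lam_pos[of i s] by (simp add: elemJ_interior_def midI_def)

lemma Smap_Tmap_gam_CMid:
  assumes i: "i \<in> {1..d}" and s: "s \<in> P"
  shows "Smap f e (Tmap lam d f e (gam lam (CMid i) s)) = gam lam (CMid i) s"
proof -
  let ?m = "midI lam i s"
  have m: "?m \<in> elemJ lam i s" using midI_in_interior[OF i s] elemJ_interior_subset by blast
  have "iem lam d s ?m = 1 - ?m"
    using iem_eq[OF i s m] omegaI_eq[OF i s] by (simp add: midI_def)
  moreover have "0 < ?m" "?m < 1"
    using midI_in_interior[OF i s] aI_nonneg[of s i] aI_add_lam_le_1[OF i s] i s
    by (auto simp: elemJ_interior_def)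
  then have "frac (- (1 - ?m)) = ?m" using frac_uminus_unit[of "1 - ?m"] by simp
  ultimately show ?thesis by (simp add: Tmap_Pair Smap_Pair f_one_minus)
qed

lemma Tmap_Smap_Tmap:
  assumes "regular p"
  shows "Tmap lam d f e (Smap f e (Tmap lam d f e p)) = Smap f e p"
proof -
  obtain x y where p: "p = (x, y)" by (cases p)
  obtain i where i: "i \<in> {1..d}" and y: "y \<in> P" and x: "x \<in> elemJ_interior lam i y"
    using assms p by (auto simp: regular_def)
  have a0: "aI lam i y \<ge> 0" and a1: "aI lam i y + lam i y \<le> 1"
    using aI_nonneg[of y i] aI_add_lam_le_1[OF i y] y i by auto
  define x' where "x' = 2 * aI lam i y + lam i y - x"
  have "iem lam d y x = x + 1 - 2 * aI lam i y - lam i y"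
    using iem_eq[OF i y] x elemJ_interior_subset omegaI_eq[OF i y] by fastforce
  moreover then have "frac (- iem lam d y x) = x'"
    using frac_uminus_unit[of "iem lam d y x"] x a0 a1 by (auto simp: elemJ_interior_def x'_def)
  moreover have "x' \<in> elemJ lam i y" using x by (auto simp: elemJ_interior_def elemJ_def x'_def)
  then have "iem lam d y x' = 1 - x"
    using iem_eq[OF i y] omegaI_eq[OF i y] by (simp add: x'_def)
  moreover have "frac (- x) = 1 - x"
    using frac_uminus_unit[of x] x a0 a1 by (auto simp: elemJ_interior_def)
  ultimately show ?thesis by (simp add: p Tmap_Pair Smap_Pair f_one_minus)
qed

lemma curve_on_symmetry_line:
  assumes cv: "valid_curve d cv" and s: "s \<in> P"
    and reg: "\<And>k. k \<le> n \<Longrightarrow> regular ((Tmap lam d f e ^^ k) (gam lam cv s))"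
  shows "on_symmetry_line (Tmap lam d f e) (Smap f e) (jval cv n) ((Tmap lam d f e ^^ n) (gam lam cv s))"
proof -
  let ?T = "Tmap lam d f e" and ?S = "Smap f e" and ?g = "gam lam cv s"
  let ?p = "(?T ^^ n) ?g"
  have reversor: "?T (?S (?T ((?T ^^ k) ?g))) = ?S ((?T ^^ k) ?g)" if "k \<le> n" for k
    using Tmap_Smap_Tmap[OF reg[OF that]] .
  have type0: "on_symmetry_line ?T ?S (2 * int n) ?p" if fixed: "?S ?g = ?g"
  proof -
    have "?S ?g = (?T ^^ n) (?S ?p)" by (rule funpow_reversor) (simp add: reversor)
    then have "(?T ^^ (2 * n)) (?S ?p) = ?p" using fixed by (simp add: mult_2 funpow_add)
    then show ?thesis by (simp add: on_symmetry_line_def nat_mult_distrib)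
  qed
  show ?thesis
  proof (cases cv)
    case C0
    then show ?thesis using type0 Smap_gam_C0 by simp
  next
    case CHalf
    then show ?thesis using type0 Smap_gam_CHalf by simp
  next
    case (CMid i)
    then have fixed: "?S (?T ?g) = ?g" using Smap_Tmap_gam_CMid cv s by simp
    show ?thesis
    proof (cases n)
      case 0
      then have "?S ?p = ?T ?p" using reversor[of 0] fixed by simp
      then show ?thesis using CMid 0 by (simp add: on_symmetry_line_def)
    next
      case (Suc m)
      have "?S (?T ?g) = (?T ^^ m) (?S ((?T ^^ m) (?T ?g)))"
      proof (rule funpow_reversor)
        fix k assume "k < m"
        then show "?T (?S (?T ((?T ^^ k) (?T ?g)))) = ?S ((?T ^^ k) (?T ?g))"
          using reversor[of "Suc k"] Suc unfolding funpow_Suc_right o_apply by simp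
      qed
      then have "?g = (?T ^^ m) (?S ?p)" using fixed Suc by (simp add: funpow_swap1)
      then have "(?T ^^ (n + m)) (?S ?p) = ?p" by (simp add: funpow_add)
      moreover have "nat (jval cv n) = n + m" using CMid Suc by simp
      ultimately show ?thesis using CMid Suc by (simp add: on_symmetry_line_def)
    qed
  qed
qed

lemma lam_isCont: "i \<in> {1..d} \<Longrightarrow> y \<in> P \<Longrightarrow> isCont (lam i) y"
  using DERIV_isCont smooth_on_C1(1)[OF lam_smooth] by blast

lemma f_isCont: "isCont f x"
  using DERIV_isCont smooth_on_C1(1)[OF f_smooth] by blast

lemma aI_tendsto:
  assumes Y: "(Y \<longlongrightarrow> y) F" and y: "y \<in> P" and i: "i \<in> {1..d}"
  shows "((\<lambda>z. aI lam i (Y z)) \<longlongrightarrow> aI lam i y) F"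
  unfolding aI_def by (intro tendsto_sum isCont_tendsto_compose[OF lam_isCont Y]) (use i y in auto)

lemma omegaI_tendsto:
  assumes Y: "(Y \<longlongrightarrow> y) F" and y: "y \<in> P" and i: "i \<in> {1..d}"
  shows "((\<lambda>z. omegaI lam d i (Y z)) \<longlongrightarrow> omegaI lam d i y) F"
  unfolding omegaI_def
  by (intro tendsto_diff tendsto_sum isCont_tendsto_compose[OF lam_isCont Y]) (use i y in auto)

lemma Tbranch_tendsto:
  assumes E: "(E \<longlongrightarrow> e) F" and W: "(W \<longlongrightarrow> (x, y)) F" and y: "y \<in> P" and i: "i \<in> {1..d}"
  shows "((\<lambda>z. Tbranch lam d f i (E z) (W z)) \<longlongrightarrow> Tbranch lam d f i e (x, y)) F"
proof -
  have X: "((\<lambda>z. fst (W z)) \<longlongrightarrow> x) F" and Y: "((\<lambda>z. snd (W z)) \<longlongrightarrow> y) F"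
    using tendsto_fst[OF W] tendsto_snd[OF W] by simp_all
  have O: "((\<lambda>z. omegaI lam d i (snd (W z))) \<longlongrightarrow> omegaI lam d i y) F"
    using omegaI_tendsto[OF Y y i] .
  show ?thesis
    unfolding Tbranch_def Let_def fst_conv snd_conv
    by (intro tendsto_Pair tendsto_add tendsto_mult X Y E O isCont_tendsto_compose[OF f_isCont])
qed

lemma eventually_elemJ_interior:
  assumes W: "(W \<longlongrightarrow> (x, y)) F" and y: "y \<in> P" and i: "i \<in> {1..d}"
    and x: "x \<in> elemJ_interior lam i y"
  shows "eventually (\<lambda>z. snd (W z) \<in> P \<and> fst (W z) \<in> elemJ_interior lam i (snd (W z))) F"
proof -
  have X: "((\<lambda>z. fst (W z)) \<longlongrightarrow> x) F" and Y: "((\<lambda>z. snd (W z)) \<longlongrightarrow> y) F"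
    using tendsto_fst[OF W] tendsto_snd[OF W] by simp_all
  have "((\<lambda>z. fst (W z) - aI lam i (snd (W z))) \<longlongrightarrow> x - aI lam i y) F"
    using aI_tendsto[OF Y y] i X by (intro tendsto_diff) auto
  from order_tendstoD(1)[OF this, of 0]
  have lower: "eventually (\<lambda>z. 0 < fst (W z) - aI lam i (snd (W z))) F"
    using x by (simp add: elemJ_interior_def)
  have "((\<lambda>z. aI lam i (snd (W z)) + lam i (snd (W z)) - fst (W z)) \<longlongrightarrow> aI lam i y + lam i y - x) F"
    using aI_tendsto[OF Y y] i X isCont_tendsto_compose[OF lam_isCont[OF i y] Y] by (intro tendsto_intros) auto
  from order_tendstoD(1)[OF this, of 0]
  have upper: "eventually (\<lambda>z. 0 < aI lam i (snd (W z)) + lam i (snd (W z)) - fst (W z)) F"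
    using x by (simp add: elemJ_interior_def)
  show ?thesis
    using topological_tendstoD[OF Y P_open y] lower upper
    by eventually_elim (auto simp: elemJ_interior_def)
qed

lemma eventually_regular:
  assumes "(W \<longlongrightarrow> p) F" and "regular p"
  shows "eventually (\<lambda>z. regular (W z)) F"
proof -
  obtain i where i: "i \<in> {1..d}" "fst p \<in> elemJ_interior lam i (snd p)" "snd p \<in> P"
    using assms(2) unfolding regular_def by blast
  show ?thesis
    using eventually_elemJ_interior[of W "fst p" "snd p" F i] assms(1) i
    by (auto simp: regular_def elim!: eventually_mono)
qed

lemma Tmap_tendsto:
  assumes E: "(E \<longlongrightarrow> 0) F" and W: "(W \<longlongrightarrow> p) F" and p: "regular p"
  shows "((\<lambda>z. Tmap lam d f (E z) (W z)) \<longlongrightarrow> Tmap lam d f 0 p) F"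
proof -
  obtain x y i where p_eq: "p = (x, y)" and i: "i \<in> {1..d}" and y: "y \<in> P"
    and x: "x \<in> elemJ_interior lam i y"
    using p by (cases p) (auto simp: regular_def)
  have ev: "eventually (\<lambda>z. Tbranch lam d f i (E z) (W z) = Tmap lam d f (E z) (W z)) F"
    using eventually_elemJ_interior[OF W[unfolded p_eq] y i x]
    by eventually_elim (metis Tmap_eq_Tbranch elemJ_interior_subset i prod.collapse subsetD)
  have "Tmap lam d f 0 p = Tbranch lam d f i 0 (x, y)"
    using Tmap_eq_Tbranch[OF i y] x elemJ_interior_subset p_eq by blast
  then show ?thesis
    using Lim_transform_eventually[OF Tbranch_tendsto[OF E W[unfolded p_eq] y i] ev] by simp
qed

lemma Tmap_funpow_tendsto:
  assumes E: "(E \<longlongrightarrow> 0) F" and W: "(W \<longlongrightarrow> p) F"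
    and reg: "\<And>j. j < k \<Longrightarrow> regular ((Tmap lam d f 0 ^^ j) p)"
  shows "((\<lambda>z. (Tmap lam d f (E z) ^^ k) (W z)) \<longlongrightarrow> (Tmap lam d f 0 ^^ k) p) F"
  using reg
proof (induction k)
  case (Suc k)
  then show ?case using Tmap_tendsto[OF E _ Suc.prems[of k]] by simp
qed (use W in simp)

lemma gam_tendsto:
  assumes Y: "(Y \<longlongrightarrow> y) F" and y: "y \<in> P" and cv: "valid_curve d cv"
  shows "((\<lambda>z. gam lam cv (Y z)) \<longlongrightarrow> gam lam cv y) F"
proof (cases cv)
  case (CMid i)
  then have i: "i \<in> {1..d}" using cv by simp
  have "((\<lambda>z. midI lam i (Y z)) \<longlongrightarrow> midI lam i y) F"
    unfolding midI_def using aI_tendsto[OF Y y i] isCont_tendsto_compose[OF lam_isCont[OF i y] Y]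
    by (intro tendsto_intros) auto
  then show ?thesis using CMid Y by (simp add: tendsto_Pair)
qed (use Y in \<open>auto intro: tendsto_Pair\<close>)

lemma per_int_translation:
  assumes y: "y \<in> P" and J: "per_int_props lam d y q J"
  obtains \<tau> where "\<And>x. x \<in> J \<Longrightarrow> (iem lam d y ^^ k) x = x + \<tau>"
proof (induction k arbitrary: thesis)
  case 0 then show ?case by (metis add.right_neutral funpow_0)
next
  case (Suc k)
  then obtain \<tau> where \<tau>: "\<And>x. x \<in> J \<Longrightarrow> (iem lam d y ^^ k) x = x + \<tau>" by blast
  obtain i where i: "i \<in> {1..d}" "(iem lam d y ^^ k) ` J \<subseteq> elemJ lam i y"
    using J unfolding per_int_props_def by blast
  have "(iem lam d y ^^ Suc k) x = x + (\<tau> + omegaI lam d i y)" if "x \<in> J" for x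
    using iem_eq[OF i(1) y] i(2) \<tau> that by auto
  then show ?case using Suc.prems by blast
qed

context
  fixes y a b q
  assumes y: "y \<in> P" and J: "per_int_props lam d y q {a..<b}"
begin

lemma per_int_nonempty: "a < b"
  using J by (auto simp: per_int_props_def)

text \<open>Each iterate translates the whole periodic interval into a single elemental interval, so the
  midpoint stays away from its endpoints.\<close>

lemma per_int_midpoint_regular: "regular ((iem lam d y ^^ k) ((a + b) / 2), y)"
proof -
  obtain \<tau> where \<tau>: "\<And>x. x \<in> {a..<b} \<Longrightarrow> (iem lam d y ^^ k) x = x + \<tau>"
    using per_int_translation[OF y J] by blast
  obtain i where i: "i \<in> {1..d}" "(iem lam d y ^^ k) ` {a..<b} \<subseteq> elemJ lam i y"
    using J unfolding per_int_props_def by blast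
  have ab: "a < b" by (rule per_int_nonempty)
  then have aJ: "a \<in> {a..<b}" and cJ: "(a + b) / 2 \<in> {a..<b}" by auto
  then have "(iem lam d y ^^ k) a \<in> elemJ lam i y" "(iem lam d y ^^ k) ((a + b) / 2) \<in> elemJ lam i y"
    using i(2) by blast+
  then have "a + \<tau> \<in> elemJ lam i y" "(a + b) / 2 + \<tau> \<in> elemJ lam i y"
    using \<tau>[OF aJ] \<tau>[OF cJ] by simp_all
  then have "aI lam i y \<le> a + \<tau>" and upper: "(a + b) / 2 + \<tau> < aI lam i y + lam i y"
    unfolding elemJ_def by auto
  moreover have "a < (a + b) / 2" using ab by simp
  ultimately have "aI lam i y < (a + b) / 2 + \<tau>" by linarith
  then have "(a + b) / 2 + \<tau> \<in> elemJ_interior lam i y"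
    using upper unfolding elemJ_interior_def by simp
  then show ?thesis using \<tau>[of "(a + b) / 2"] ab i(1) y by (auto simp: regular_def)
qed

lemma per_int_midpoint_period: "(iem lam d y ^^ q) ((a + b) / 2) = (a + b) / 2"
proof -
  obtain \<tau> where \<tau>: "\<And>x. x \<in> {a..<b} \<Longrightarrow> (iem lam d y ^^ q) x = x + \<tau>"
    using per_int_translation[OF y J] by blast
  have im: "(iem lam d y ^^ q) ` {a..<b} = {a..<b}" using J by (simp add: per_int_props_def)
  have aJ: "a \<in> {a..<b}" using per_int_nonempty by simp
  then have "(iem lam d y ^^ q) a \<in> {a..<b}" using im by blast
  then have "a + \<tau> \<in> {a..<b}" using \<tau>[OF aJ] by simp
  moreover obtain x where "x \<in> {a..<b}" "(iem lam d y ^^ q) x = a" using aJ im by (metis imageE)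
  then have "x \<in> {a..<b}" "x + \<tau> = a" using \<tau> by auto
  ultimately have "\<tau> = 0" by auto
  then show ?thesis using \<tau> per_int_nonempty by simp
qed

lemma per_int_midpoint_minimal:
  assumes k: "0 < k" "k < q"
  shows "(iem lam d y ^^ k) ((a + b) / 2) \<noteq> (a + b) / 2"
proof
  assume fixed: "(iem lam d y ^^ k) ((a + b) / 2) = (a + b) / 2"
  obtain \<tau> where \<tau>: "\<And>x. x \<in> {a..<b} \<Longrightarrow> (iem lam d y ^^ k) x = x + \<tau>"
    using per_int_translation[OF y J] by blast
  have "(a + b) / 2 \<in> {a..<b}" using per_int_nonempty by simp
  then have "(a + b) / 2 + \<tau> = (a + b) / 2" using fixed \<tau> by simp
  then have "\<tau> = 0" by linarith
  then have "(iem lam d y ^^ k) ` {a..<b} = {a..<b}" using \<tau> by simp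
  then show False using J k by (auto simp: per_int_props_def)
qed

end

lemma periodic_interval_orbit:
  assumes y: "y \<in> P" and Jper: "periodic_interval lam d y q J"
    and p: "p \<in> {(Tmap lam d f 0 ^^ k) ((Inf J + Sup J) / 2, y) | k. k < q}"
  obtains a b m where "per_int_props lam d y q {a..<b}" "p = (Tmap lam d f 0 ^^ m) ((a + b) / 2, y)"
    "0 < q" "\<And>k. regular ((Tmap lam d f 0 ^^ k) p)"
    "\<And>k. 0 < k \<Longrightarrow> k < q \<Longrightarrow> (Tmap lam d f 0 ^^ k) p \<noteq> p"
proof -
  have J: "per_int_props lam d y q J" using Jper by (simp add: periodic_interval_def)
  then obtain a b where ab: "a < b" and Jab: "J = {a..<b}" by (auto simp: per_int_props_def)
  then have J': "per_int_props lam d y q {a..<b}" using J by simp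
  obtain m where pm: "p = (Tmap lam d f 0 ^^ m) ((a + b) / 2, y)"
    using p ab Jab by auto
  show ?thesis
  proof (rule that[OF J' pm])
    show "0 < q" using J by (simp add: per_int_props_def)
    show "regular ((Tmap lam d f 0 ^^ k) p)" for k
      using per_int_midpoint_regular[OF y J', of "k + m"] pm by (simp add: Tmap_zero_funpow funpow_add)
    show "(Tmap lam d f 0 ^^ k) p \<noteq> p" if "0 < k" "k < q" for k
      using funpow_minimal_period_shift[where T = "iem lam d y" and q = q and p = "(a + b) / 2" and k = k and m = m] that
        per_int_midpoint_period[OF y J'] per_int_midpoint_minimal[OF y J'] pm
      by (simp add: Tmap_zero_funpow)
  qed
qed

lemma gam_unit: "valid_curve d cv \<Longrightarrow> s \<in> P \<Longrightarrow> fst (gam lam cv s) \<in> {0..<1} \<and> snd (gam lam cv s) = s"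
proof (cases cv)
  case (CMid i)
  assume "valid_curve d cv" "s \<in> P"
  then have "i \<in> {1..d}" using CMid by simp
  then have "midI lam i s \<in> {0..<1}"
    using midI_in_interior[of i s] elemJ_interior_subset[of lam i s] elemJ_subset_unit[of i s] \<open>s \<in> P\<close>
    by blast
  then show ?thesis using CMid by simp
qed auto

lemma curve_orbit_regular:
  assumes y: "y \<in> P" and J: "per_int_props lam d y q {a..<b}" and cv: "valid_curve d cv" and s: "s \<in> P"
    and hit: "(Tmap lam d f 0 ^^ n) (gam lam cv s) = (Tmap lam d f 0 ^^ m) ((a + b) / 2, y)"
  shows "s = y" and "\<And>k. k \<le> n \<Longrightarrow> regular ((Tmap lam d f 0 ^^ k) (gam lam cv s))"
proof -
  let ?F = "iem lam d y" and ?c = "(a + b) / 2"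
  let ?C = "range (\<lambda>j. (?F ^^ j) ?c)"
  obtain x0 where g: "gam lam cv s = (x0, s)" and x0: "x0 \<in> {0..<1}"
    using gam_unit[OF cv s] by (cases "gam lam cv s") auto
  show sy: "s = y" using hit g by (simp add: Tmap_zero_funpow)
  have "?C \<subseteq> {0..<1}" using regular_unit[OF per_int_midpoint_regular[OF y J]] by auto
  moreover have "?C \<subseteq> ?F ` ?C"
  proof clarify
    fix j
    have "0 < q" using J by (simp add: per_int_props_def)
    define j' where "j' = (if j = 0 then q else j) - 1"
    then have j': "Suc j' = (if j = 0 then q else j)" using \<open>0 < q\<close> by simp
    have "(?F ^^ j) ?c = (?F ^^ Suc j') ?c"
      unfolding j' using per_int_midpoint_period[OF y J] by simp
    then show "(?F ^^ j) ?c \<in> ?F ` ?C" by simp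
  qed
  moreover have "(?F ^^ n) x0 \<in> ?C" using hit g sy by (auto simp: Tmap_zero_funpow)
  moreover have "?F ` {0..<1} \<subseteq> {0..<1}" using iem_maps_unit[OF y] by blast
  ultimately have on_cycle: "(?F ^^ k) x0 \<in> ?C" if "k \<le> n" for k
    using inj_on_funpow_backward_invariant[OF iem_inj_on_unit[OF y] _ x0, of ?C n k] that by blast
  show "regular ((Tmap lam d f 0 ^^ k) (gam lam cv s))" if k_le: "k \<le> n" for k
  proof -
    obtain j where "(?F ^^ k) x0 = (?F ^^ j) ?c" using on_cycle[OF k_le] by blast
    then show ?thesis using per_int_midpoint_regular[OF y J, of j] g sy by (simp add: Tmap_zero_funpow)
  qed
qed

lemma C1_on_lam:
  assumes "C1_on U Y" "Y ` U \<subseteq> P" "i \<in> {1..d}"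
  shows "C1_on U (\<lambda>z. lam i (Y z))"
  by (rule C1_on_compose_real[OF assms(1,2)]) (use smooth_on_C1[OF lam_smooth[OF assms(3)]] in auto)

lemma C1_on_f: "C1_on U X \<Longrightarrow> C1_on U (\<lambda>z. f (X z))"
  by (rule C1_on_compose_real[OF _ subset_UNIV]) (use smooth_on_C1[OF f_smooth] in auto)

lemma C1_on_aI: "C1_on U Y \<Longrightarrow> Y ` U \<subseteq> P \<Longrightarrow> i \<in> {1..d} \<Longrightarrow> C1_on U (\<lambda>z. aI lam i (Y z))"
  unfolding aI_def by (intro C1_on_sum C1_on_lam) auto

lemma C1_on_omegaI: "C1_on U Y \<Longrightarrow> Y ` U \<subseteq> P \<Longrightarrow> i \<in> {1..d} \<Longrightarrow> C1_on U (\<lambda>z. omegaI lam d i (Y z))"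
  unfolding omegaI_def by (intro C1_on_diff C1_on_sum C1_on_lam) auto

lemma C1_on_gam:
  assumes S: "C1_on U S" "S ` U \<subseteq> P" and cv: "valid_curve d cv"
  shows "C1_on U (\<lambda>z. gam lam cv (S z))"
proof (cases cv)
  case (CMid i)
  then have "i \<in> {1..d}" using cv by simp
  then have "C1_on U (\<lambda>z. (aI lam i (S z) + lam i (S z) * (1/2), S z))"
    using S by (intro C1_on_Pair C1_on_add C1_on_mult C1_on_aI C1_on_lam C1_on_const)
  then show ?thesis using CMid by (simp add: midI_def)
qed (use S in \<open>auto intro: C1_on_Pair C1_on_const\<close>)

lemma C1_on_itinerary_orbit:
  assumes S: "C1_on U S" "S ` U \<subseteq> P" and E: "C1_on U E" and cv: "valid_curve d cv"
    and ix: "\<And>j. j < k \<Longrightarrow> ix j \<in> {1..d}"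
    and inP: "\<And>z j. z \<in> U \<Longrightarrow> j < k \<Longrightarrow> snd (itinerary_orbit lam d f ix cv (S z) (E z) j) \<in> P"
  shows "C1_on U (\<lambda>z. itinerary_orbit lam d f ix cv (S z) (E z) k)"
  using ix inP
proof (induction k)
  case 0
  then show ?case using C1_on_gam[OF S cv] by simp
next
  case (Suc k)
  let ?W = "\<lambda>z. itinerary_orbit lam d f ix cv (S z) (E z) k"
  have W: "C1_on U ?W" using Suc by simp
  have X: "C1_on U (\<lambda>z. fst (?W z))" and Y: "C1_on U (\<lambda>z. snd (?W z))"
    using C1_on_linear_compose[OF W bounded_linear_fst] C1_on_linear_compose[OF W bounded_linear_snd] by auto
  have YP: "(\<lambda>z. snd (?W z)) ` U \<subseteq> P" using Suc.prems(2) by blast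
  have X': "C1_on U (\<lambda>z. fst (?W z) + omegaI lam d (ix k) (snd (?W z)))"
    using Suc.prems(1)[of k] by (intro C1_on_add X C1_on_omegaI[OF Y YP]) simp
  show ?case
    unfolding itinerary_orbit.simps Tbranch_def Let_def
    by (intro C1_on_Pair X' C1_on_add Y C1_on_mult E C1_on_f)
qed

lemma itinerary_orbit_eq:
  assumes "\<And>j. j < k \<Longrightarrow> ix j \<in> {1..d} \<and> snd ((Tmap lam d f e ^^ j) (gam lam cv s)) \<in> P \<and>
              fst ((Tmap lam d f e ^^ j) (gam lam cv s)) \<in> elemJ lam (ix j) (snd ((Tmap lam d f e ^^ j) (gam lam cv s)))"
  shows "(Tmap lam d f e ^^ k) (gam lam cv s) = itinerary_orbit lam d f ix cv s e k"
  using assms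
proof (induction k)
  case (Suc k)
  then have IH: "(Tmap lam d f e ^^ k) (gam lam cv s) = itinerary_orbit lam d f ix cv s e k" by simp
  obtain x y where xy: "itinerary_orbit lam d f ix cv s e k = (x, y)" by (cases "itinerary_orbit lam d f ix cv s e k")
  have "ix k \<in> {1..d}" "y \<in> P" "x \<in> elemJ lam (ix k) y" using Suc.prems[of k] IH xy by auto
  then show ?case using IH xy Tmap_eq_Tbranch by simp
qed simp

lemma smooth_branch:
  assumes cv: "valid_curve d cv" and s0: "s0 \<in> P"
    and reg: "\<forall>k\<le>n. regular ((Tmap lam d f 0 ^^ k) (gam lam cv s0))"
  obtains \<Gamma> U where "open U" "(s0, 0) \<in> U" "C1_on U \<Gamma>"
    "\<And>s e. (s, e) \<in> U \<Longrightarrow> s \<in> P \<and> (\<forall>k\<le>n. regular ((Tmap lam d f e ^^ k) (gam lam cv s)))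
        \<and> (Tmap lam d f e ^^ n) (gam lam cv s) = \<Gamma> (s, e)"
proof -
  let ?w = "\<lambda>k. (Tmap lam d f 0 ^^ k) (gam lam cv s0)"
  let ?orb = "\<lambda>k (z :: real \<times> real). (Tmap lam d f (snd z) ^^ k) (gam lam cv (fst z))"
  define ix where "ix k = (SOME i. i \<in> {1..d} \<and> fst (?w k) \<in> elemJ_interior lam i (snd (?w k)))" for k
  have ix: "ix k \<in> {1..d} \<and> fst (?w k) \<in> elemJ_interior lam (ix k) (snd (?w k))" if "k \<le> n" for k
    unfolding ix_def by (rule someI_ex) (use reg[rule_format, OF that] in \<open>auto simp: regular_def\<close>)
  have z: "((\<lambda>z. z) \<longlongrightarrow> (s0, 0::real)) (nhds (s0, 0))" by (rule filterlim_ident)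
  have S: "(fst \<longlongrightarrow> s0) (nhds (s0, 0::real))" and E: "(snd \<longlongrightarrow> (0::real)) (nhds (s0, 0::real))"
    using tendsto_fst[OF z] tendsto_snd[OF z] by simp_all
  have "eventually (\<lambda>z. snd (?orb k z) \<in> P \<and> fst (?orb k z) \<in> elemJ_interior lam (ix k) (snd (?orb k z)))
          (nhds (s0, 0))" if "k \<le> n" for k
  proof -
    have "(?orb k \<longlongrightarrow> ?w k) (nhds (s0, 0))"
      using Tmap_funpow_tendsto[OF E gam_tendsto[OF S s0 cv]] reg that by simp
    then show ?thesis
      using eventually_elemJ_interior[of "?orb k" "fst (?w k)" "snd (?w k)"] ix[OF that] reg[rule_format, OF that]
      by (simp add: regular_def)
  qed
  then have "eventually (\<lambda>z. fst z \<in> P \<and> (\<forall>k\<in>{..n}. snd (?orb k z) \<in> P \<and>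
               fst (?orb k z) \<in> elemJ_interior lam (ix k) (snd (?orb k z)))) (nhds (s0, 0))"
    using topological_tendstoD[OF S P_open s0] by (intro eventually_conj eventually_ball_finite) auto
  then obtain U where U: "open U" "(s0, 0) \<in> U"
    and good: "\<And>z k. z \<in> U \<Longrightarrow> fst z \<in> P \<and> (k \<le> n \<longrightarrow> snd (?orb k z) \<in> P \<and>
               fst (?orb k z) \<in> elemJ_interior lam (ix k) (snd (?orb k z)))"
    unfolding eventually_nhds by auto
  have branch: "?orb k z = itinerary_orbit lam d f ix cv (fst z) (snd z) k" if "z \<in> U" "k \<le> n" for z k
    using good[OF that(1)] that(2) ix elemJ_interior_subset by (intro itinerary_orbit_eq) fastforce
  show ?thesis
  proof (rule that[OF U, of "\<lambda>z. itinerary_orbit lam d f ix cv (fst z) (snd z) n"])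
    show "C1_on U (\<lambda>z. itinerary_orbit lam d f ix cv (fst z) (snd z) n)"
    proof (rule C1_on_itinerary_orbit[OF C1_on_linear[OF bounded_linear_fst] _ C1_on_linear[OF bounded_linear_snd] cv])
      show "fst ` U \<subseteq> P" using good by blast
      show "ix j \<in> {1..d}" if "j < n" for j using ix that by simp
      show "snd (itinerary_orbit lam d f ix cv (fst z) (snd z) j) \<in> P" if "z \<in> U" "j < n" for z j
        using good[OF that(1), of j] branch[OF that(1), of j] that(2) by simp
    qed
    show "s \<in> P \<and> (\<forall>k\<le>n. regular ((Tmap lam d f e ^^ k) (gam lam cv s)))
          \<and> (Tmap lam d f e ^^ n) (gam lam cv s) = itinerary_orbit lam d f ix cv (fst (s, e)) (snd (s, e)) n"
      if sU: "(s, e) \<in> U" for s e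
    proof -
      have "regular ((Tmap lam d f e ^^ k) (gam lam cv s))" if "k \<le> n" for k
        using good[OF sU, of k] ix[OF that] that unfolding regular_def by auto
      then show ?thesis using good[OF sU] branch[OF sU] by simp
    qed
  qed
qed

lemma transverse_curves_intersection:
  assumes cA: "valid_curve d cA" and cB: "valid_curve d cB" and yA: "yA \<in> P" and yB: "yB \<in> P"
    and regA: "\<forall>k\<le>nA. regular ((Tmap lam d f 0 ^^ k) (gam lam cA yA))"
    and regB: "\<forall>k\<le>nB. regular ((Tmap lam d f 0 ^^ k) (gam lam cB yB))"
    and meet: "(Tmap lam d f 0 ^^ nA) (gam lam cA yA) = (Tmap lam d f 0 ^^ nB) (gam lam cB yB)"
    and derA: "((\<lambda>y. (Tmap lam d f 0 ^^ nA) (gam lam cA y)) has_vector_derivative vA) (at yA)"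
    and derB: "((\<lambda>y. (Tmap lam d f 0 ^^ nB) (gam lam cB y)) has_vector_derivative vB) (at yB)"
    and transversal: "fst vA * snd vB - snd vA * fst vB \<noteq> 0"
  obtains eps0 eta pe where "0 < eps0" "0 < eta" "pe 0 = (Tmap lam d f 0 ^^ nA) (gam lam cA yA)"
    "continuous_on {-eps0<..<eps0} pe"
    "\<And>e. \<bar>e\<bar> < eps0 \<Longrightarrow>
       {p. (\<exists>y. \<bar>y - yA\<bar> < eta \<and> p = (Tmap lam d f e ^^ nA) (gam lam cA y)) \<and>
           (\<exists>y. \<bar>y - yB\<bar> < eta \<and> p = (Tmap lam d f e ^^ nB) (gam lam cB y))} = {pe e}"
    "\<And>e. \<bar>e\<bar> < eps0 \<Longrightarrow> \<exists>sA sB. sA \<in> P \<and> sB \<in> P \<and>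
       (\<forall>k\<le>nA. regular ((Tmap lam d f e ^^ k) (gam lam cA sA))) \<and>
       (\<forall>k\<le>nB. regular ((Tmap lam d f e ^^ k) (gam lam cB sB))) \<and>
       pe e = (Tmap lam d f e ^^ nA) (gam lam cA sA) \<and> pe e = (Tmap lam d f e ^^ nB) (gam lam cB sB)"
proof -
  obtain \<Gamma>A UA where UA: "open UA" "(yA, 0) \<in> UA" and C1A: "C1_on UA \<Gamma>A"
    and branchA: "\<And>s e. (s, e) \<in> UA \<Longrightarrow> s \<in> P \<and> (\<forall>k\<le>nA. regular ((Tmap lam d f e ^^ k) (gam lam cA s)))
        \<and> (Tmap lam d f e ^^ nA) (gam lam cA s) = \<Gamma>A (s, e)"
    by (rule smooth_branch[OF cA yA regA]) (rule that; assumption)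
  obtain \<Gamma>B UB where UB: "open UB" "(yB, 0) \<in> UB" and C1B: "C1_on UB \<Gamma>B"
    and branchB: "\<And>s e. (s, e) \<in> UB \<Longrightarrow> s \<in> P \<and> (\<forall>k\<le>nB. regular ((Tmap lam d f e ^^ k) (gam lam cB s)))
        \<and> (Tmap lam d f e ^^ nB) (gam lam cB s) = \<Gamma>B (s, e)"
    by (rule smooth_branch[OF cB yB regB]) (rule that; assumption)
  have dA: "((\<lambda>s. \<Gamma>A (s, 0)) has_vector_derivative vA) (at yA)"
    by (rule has_vector_derivative_slice[OF derA UA]) (use branchA in simp)
  have dB: "((\<lambda>s. \<Gamma>B (s, 0)) has_vector_derivative vB) (at yB)"
    by (rule has_vector_derivative_slice[OF derB UB]) (use branchB in simp)
  have meet': "\<Gamma>A (yA, 0) = \<Gamma>B (yB, 0)" using meet branchA[OF UA(2)] branchB[OF UB(2)] by simp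
  obtain eps0 eta \<sigma> where eps0: "0 < eps0" "eps0 \<le> eta"
    and inA: "\<And>s e. \<bar>s - yA\<bar> < eta \<Longrightarrow> \<bar>e\<bar> < eta \<Longrightarrow> (s, e) \<in> UA"
    and inB: "\<And>t e. \<bar>t - yB\<bar> < eta \<Longrightarrow> \<bar>e\<bar> < eta \<Longrightarrow> (t, e) \<in> UB"
    and \<sigma>0: "\<sigma> 0 = yA" and c\<sigma>: "continuous_on {-eps0<..<eps0} \<sigma>"
    and meets: "\<And>e. \<bar>e\<bar> < eps0 \<Longrightarrow>
       \<bar>\<sigma> e - yA\<bar> < eta \<and> (\<exists>t. \<bar>t - yB\<bar> < eta \<and> \<Gamma>A (\<sigma> e, e) = \<Gamma>B (t, e))"
    and unique: "\<And>e s t. \<bar>e\<bar> < eps0 \<Longrightarrow> \<bar>s - yA\<bar> < eta \<Longrightarrow> \<bar>t - yB\<bar> < eta \<Longrightarrow>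
       \<Gamma>A (s, e) = \<Gamma>B (t, e) \<Longrightarrow> s = \<sigma> e"
    by (rule transversal_intersection_persists[OF UA C1A UB C1B meet' dA dB transversal])
       (rule that; assumption)
  define pe where "pe e = \<Gamma>A (\<sigma> e, e)" for e
  show ?thesis
  proof (rule that[of eps0 eta pe])
    show "0 < eps0" "0 < eta" using eps0 by auto
    show "pe 0 = (Tmap lam d f 0 ^^ nA) (gam lam cA yA)" using branchA[OF UA(2)] \<sigma>0 by (simp add: pe_def)
    have "(\<lambda>e. (\<sigma> e, e)) ` {-eps0<..<eps0} \<subseteq> UA" using meets inA eps0 by fastforce
    moreover have "continuous_on {-eps0<..<eps0} (\<lambda>e. (\<sigma> e, e))" using c\<sigma> by (intro continuous_intros)
    ultimately show "continuous_on {-eps0<..<eps0} pe"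
      unfolding pe_def using continuous_on_compose2[OF C1_on_continuous_on[OF C1A]] by blast
    fix e assume e: "\<bar>e\<bar> < eps0"
    then have e_eta: "\<bar>e\<bar> < eta" using eps0 by simp
    obtain t where t: "\<bar>t - yB\<bar> < eta" "\<Gamma>A (\<sigma> e, e) = \<Gamma>B (t, e)" and \<sigma>e: "\<bar>\<sigma> e - yA\<bar> < eta"
      using meets[OF e] by blast
    note onA = branchA[OF inA[OF \<sigma>e e_eta]] and onB = branchB[OF inB[OF t(1) e_eta]]
    show "\<exists>sA sB. sA \<in> P \<and> sB \<in> P \<and>
       (\<forall>k\<le>nA. regular ((Tmap lam d f e ^^ k) (gam lam cA sA))) \<and>
       (\<forall>k\<le>nB. regular ((Tmap lam d f e ^^ k) (gam lam cB sB))) \<and>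
       pe e = (Tmap lam d f e ^^ nA) (gam lam cA sA) \<and> pe e = (Tmap lam d f e ^^ nB) (gam lam cB sB)"
      using onA onB t(2) unfolding pe_def by (intro exI[of _ "\<sigma> e"] exI[of _ t]) simp
    show "{p. (\<exists>y. \<bar>y - yA\<bar> < eta \<and> p = (Tmap lam d f e ^^ nA) (gam lam cA y)) \<and>
           (\<exists>y. \<bar>y - yB\<bar> < eta \<and> p = (Tmap lam d f e ^^ nB) (gam lam cB y))} = {pe e}"
    proof (intro equalityI subsetI)
      fix p assume "p \<in> {p. (\<exists>y. \<bar>y - yA\<bar> < eta \<and> p = (Tmap lam d f e ^^ nA) (gam lam cA y)) \<and>
           (\<exists>y. \<bar>y - yB\<bar> < eta \<and> p = (Tmap lam d f e ^^ nB) (gam lam cB y))}"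
      then obtain s s' where s: "\<bar>s - yA\<bar> < eta" "p = (Tmap lam d f e ^^ nA) (gam lam cA s)"
        and s': "\<bar>s' - yB\<bar> < eta" "p = (Tmap lam d f e ^^ nB) (gam lam cB s')" by blast
      have "p = \<Gamma>A (s, e)" "p = \<Gamma>B (s', e)"
        using branchA[OF inA[OF s(1) e_eta]] branchB[OF inB[OF s'(1) e_eta]] s(2) s'(2) by simp_all
      then have "s = \<sigma> e" using unique[OF e s(1) s'(1)] by simp
      then show "p \<in> {pe e}" using \<open>p = \<Gamma>A (s, e)\<close> by (simp add: pe_def)
    next
      fix p assume "p \<in> {pe e}"
      then show "p \<in> {p. (\<exists>y. \<bar>y - yA\<bar> < eta \<and> p = (Tmap lam d f e ^^ nA) (gam lam cA y)) \<and>
           (\<exists>y. \<bar>y - yB\<bar> < eta \<and> p = (Tmap lam d f e ^^ nB) (gam lam cB y))}"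
        using onA onB t \<sigma>e by (auto simp: pe_def)
    qed
  qed
qed

lemma periodic_orbit_persists:
  assumes cpe: "continuous_on {-eps0<..<eps0} pe" and eps0: "0 < eps0" and pe0: "pe 0 = p"
    and reg: "\<forall>k. regular ((Tmap lam d f 0 ^^ k) p)"
    and least: "\<forall>k. 0 < k \<and> k < q \<longrightarrow> (Tmap lam d f 0 ^^ k) p \<noteq> p"
  obtains eps1 where "0 < eps1" "\<And>e. \<bar>e\<bar> < eps1 \<Longrightarrow>
      (\<forall>k<q. regular ((Tmap lam d f e ^^ k) (pe e))) \<and>
      (\<forall>k. 0 < k \<and> k < q \<longrightarrow> (Tmap lam d f e ^^ k) (pe e) \<noteq> pe e)"
proof -
  have "isCont pe 0"
    using cpe eps0 continuous_on_eq_continuous_at[of "{-eps0<..<eps0}" pe] by simp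
  then have "(pe \<longlongrightarrow> pe 0) (nhds 0)" unfolding isCont_def tendsto_at_iff_tendsto_nhds .
  then have pe: "(pe \<longlongrightarrow> p) (nhds 0)" using pe0 by simp
  have E: "((\<lambda>e. e) \<longlongrightarrow> (0::real)) (nhds 0)" by (rule filterlim_ident)
  have orbit: "((\<lambda>e. (Tmap lam d f e ^^ k) (pe e)) \<longlongrightarrow> (Tmap lam d f 0 ^^ k) p) (nhds 0)" for k
    using Tmap_funpow_tendsto[OF E pe] reg by blast
  have "eventually (\<lambda>e. \<forall>k\<in>{..<q}. regular ((Tmap lam d f e ^^ k) (pe e))) (nhds 0)"
    using eventually_regular[OF orbit reg[rule_format]] by (intro eventually_ball_finite) auto
  moreover have "eventually (\<lambda>e. \<forall>k\<in>{0<..<q}. (Tmap lam d f e ^^ k) (pe e) \<noteq> pe e) (nhds 0)"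
  proof (intro eventually_ball_finite ballI)
    fix k assume "k \<in> {0<..<q}"
    then have "(Tmap lam d f 0 ^^ k) p - p \<noteq> 0" using least by simp
    from tendsto_imp_eventually_ne[OF tendsto_diff[OF orbit pe] this]
    show "eventually (\<lambda>e. (Tmap lam d f e ^^ k) (pe e) \<noteq> pe e) (nhds 0)" by (rule eventually_mono) simp
  qed simp
  ultimately have "eventually (\<lambda>e. (\<forall>k<q. regular ((Tmap lam d f e ^^ k) (pe e))) \<and>
      (\<forall>k. 0 < k \<and> k < q \<longrightarrow> (Tmap lam d f e ^^ k) (pe e) \<noteq> pe e)) (nhds 0)"
    by eventually_elim auto
  then obtain eps1 where "0 < eps1" and "\<And>e. \<bar>e\<bar> < eps1 \<Longrightarrow>
      (\<forall>k<q. regular ((Tmap lam d f e ^^ k) (pe e))) \<and>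
      (\<forall>k. 0 < k \<and> k < q \<longrightarrow> (Tmap lam d f e ^^ k) (pe e) \<noteq> pe e)"
    unfolding eventually_nhds_metric dist_real_def by auto
  then show ?thesis by (rule that)
qed

lemma sym_per_orbit_of_symmetry_curves:
  assumes cA: "valid_curve d cA" and cB: "valid_curve d cB" and sA: "sA \<in> P" and sB: "sB \<in> P"
    and regA: "\<forall>k\<le>nA. regular ((Tmap lam d f e ^^ k) (gam lam cA sA))"
    and regB: "\<forall>k\<le>nB. regular ((Tmap lam d f e ^^ k) (gam lam cB sB))"
    and pA: "p = (Tmap lam d f e ^^ nA) (gam lam cA sA)" and pB: "p = (Tmap lam d f e ^^ nB) (gam lam cB sB)"
    and jq: "\<bar>jval cA nA - jval cB nB\<bar> = int q" and q: "0 < q"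
    and reg: "\<forall>k<q. regular ((Tmap lam d f e ^^ k) p)"
    and least: "\<forall>k. 0 < k \<and> k < q \<longrightarrow> (Tmap lam d f e ^^ k) p \<noteq> p"
  shows "sym_per_orbit lam d f e P q p"
proof -
  let ?T = "Tmap lam d f e" and ?S = "Smap f e"
  have lineA: "on_symmetry_line ?T ?S (jval cA nA) p"
    unfolding pA by (rule curve_on_symmetry_line[OF cA sA]) (use regA in blast)
  have lineB: "on_symmetry_line ?T ?S (jval cB nB) p"
    unfolding pB by (rule curve_on_symmetry_line[OF cB sB]) (use regB in blast)
  have per: "(?T ^^ q) p = p" by (rule symmetry_lines_period[OF lineA lineB jq])
  have reg_all: "regular ((?T ^^ k) p)" for k
    using reg funpow_mod_eq[OF per, of k] q by (metis mod_less_divisor)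
  have "?S ` {(?T ^^ k) p | k. k < q} = {(?T ^^ k) p | k. k < q}"
    using reversible_orbit_symmetric[OF q per Tmap_Smap_Tmap[OF reg_all]
        Smap_involutive[OF regular_unit[OF reg_all]] lineA] .
  then show ?thesis
    using regular_unit[OF reg_all[of 0]] q per least reg_all
    unfolding sym_per_orbit_def regular_def by auto
qed

lemma symmetric_periodic_orbit_continuation:
  assumes cA: "valid_curve d cA" and cB: "valid_curve d cB" and yA: "yA \<in> P" and yB: "yB \<in> P"
    and jq: "\<bar>jval cA nA - jval cB nB\<bar> = int q" and q: "0 < q"
    and regA: "\<forall>k\<le>nA. regular ((Tmap lam d f 0 ^^ k) (gam lam cA yA))"
    and regB: "\<forall>k\<le>nB. regular ((Tmap lam d f 0 ^^ k) (gam lam cB yB))"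
    and hitA: "(Tmap lam d f 0 ^^ nA) (gam lam cA yA) = pstar"
    and hitB: "(Tmap lam d f 0 ^^ nB) (gam lam cB yB) = pstar"
    and reg: "\<And>k. regular ((Tmap lam d f 0 ^^ k) pstar)"
    and least: "\<And>k. 0 < k \<Longrightarrow> k < q \<Longrightarrow> (Tmap lam d f 0 ^^ k) pstar \<noteq> pstar"
    and derA: "((\<lambda>y. (Tmap lam d f 0 ^^ nA) (gam lam cA y)) has_vector_derivative vA) (at yA)"
    and derB: "((\<lambda>y. (Tmap lam d f 0 ^^ nB) (gam lam cB y)) has_vector_derivative vB) (at yB)"
    and transversal: "fst vA * snd vB - snd vA * fst vB \<noteq> 0"
  shows "\<exists>eps0>0. \<exists>V :: (complex \<times> real) set. open V \<and> emb pstar \<in> V \<and>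
           (\<exists>eta>0. \<exists>pe :: real \<Rightarrow> real \<times> real.
              pe 0 = pstar \<and> continuous_on {-eps0<..<eps0} (emb \<circ> pe) \<and>
              (\<forall>eps. \<bar>eps\<bar> < eps0 \<longrightarrow>
                 {p. fst p \<in> {0..<1} \<and> emb p \<in> V \<and>
                     (\<exists>y. \<bar>y - yA\<bar> < eta \<and> p = (Tmap lam d f eps ^^ nA) (gam lam cA y)) \<and>
                     (\<exists>y. \<bar>y - yB\<bar> < eta \<and> p = (Tmap lam d f eps ^^ nB) (gam lam cB y))}
                   = {pe eps} \<and>
                 sym_per_orbit lam d f eps P q (pe eps)))"
proof -
  have meet: "(Tmap lam d f 0 ^^ nA) (gam lam cA yA) = (Tmap lam d f 0 ^^ nB) (gam lam cB yB)"
    using hitA hitB by simp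
  obtain eps0 eta pe where eps0: "0 < eps0" and eta: "0 < eta"
    and pe0: "pe 0 = (Tmap lam d f 0 ^^ nA) (gam lam cA yA)" and cpe: "continuous_on {-eps0<..<eps0} pe"
    and intersection: "\<And>e. \<bar>e\<bar> < eps0 \<Longrightarrow>
       {p. (\<exists>y. \<bar>y - yA\<bar> < eta \<and> p = (Tmap lam d f e ^^ nA) (gam lam cA y)) \<and>
           (\<exists>y. \<bar>y - yB\<bar> < eta \<and> p = (Tmap lam d f e ^^ nB) (gam lam cB y))} = {pe e}"
    and on_curves: "\<And>e. \<bar>e\<bar> < eps0 \<Longrightarrow> \<exists>sA sB. sA \<in> P \<and> sB \<in> P \<and>
       (\<forall>k\<le>nA. regular ((Tmap lam d f e ^^ k) (gam lam cA sA))) \<and>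
       (\<forall>k\<le>nB. regular ((Tmap lam d f e ^^ k) (gam lam cB sB))) \<and>
       pe e = (Tmap lam d f e ^^ nA) (gam lam cA sA) \<and> pe e = (Tmap lam d f e ^^ nB) (gam lam cB sB)"
    by (rule transverse_curves_intersection[OF cA cB yA yB regA regB meet derA derB transversal])
       (rule that; assumption)
  have "pe 0 = pstar" using pe0 hitA by simp
  have reg': "\<forall>k. regular ((Tmap lam d f 0 ^^ k) pstar)" using reg by blast
  have least': "\<forall>k. 0 < k \<and> k < q \<longrightarrow> (Tmap lam d f 0 ^^ k) pstar \<noteq> pstar" using least by blast
  obtain eps1 where "0 < eps1" and persists: "\<And>e. \<bar>e\<bar> < eps1 \<Longrightarrow>
      (\<forall>k<q. regular ((Tmap lam d f e ^^ k) (pe e))) \<and>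
      (\<forall>k. 0 < k \<and> k < q \<longrightarrow> (Tmap lam d f e ^^ k) (pe e) \<noteq> pe e)"
    by (rule periodic_orbit_persists[OF cpe eps0 \<open>pe 0 = pstar\<close> reg' least']) (rule that; assumption)
  define eps where "eps = min eps0 eps1"
  have "0 < eps" using eps0 \<open>0 < eps1\<close> by (simp add: eps_def)
  moreover have "\<exists>pe'. pe' 0 = pstar \<and> continuous_on {-eps<..<eps} (emb \<circ> pe') \<and>
              (\<forall>e. \<bar>e\<bar> < eps \<longrightarrow>
                 {p. fst p \<in> {0..<1} \<and> emb p \<in> UNIV \<and>
                     (\<exists>y. \<bar>y - yA\<bar> < eta \<and> p = (Tmap lam d f e ^^ nA) (gam lam cA y)) \<and>
                     (\<exists>y. \<bar>y - yB\<bar> < eta \<and> p = (Tmap lam d f e ^^ nB) (gam lam cB y))}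
                   = {pe' e} \<and>
                 sym_per_orbit lam d f e P q (pe' e))"
  proof (intro exI[of _ pe] conjI allI impI)
    show "pe 0 = pstar" using pe0 hitA by simp
    have "continuous_on {-eps<..<eps} pe"
      using cpe by (rule continuous_on_subset) (auto simp: eps_def)
    then show "continuous_on {-eps<..<eps} (emb \<circ> pe)"
      unfolding emb_def o_def by (intro continuous_intros)
    fix e assume e: "\<bar>e\<bar> < eps"
    then obtain sA sB where curves: "sA \<in> P" "sB \<in> P"
      "\<forall>k\<le>nA. regular ((Tmap lam d f e ^^ k) (gam lam cA sA))"
      "\<forall>k\<le>nB. regular ((Tmap lam d f e ^^ k) (gam lam cB sB))"
      "pe e = (Tmap lam d f e ^^ nA) (gam lam cA sA)" "pe e = (Tmap lam d f e ^^ nB) (gam lam cB sB)"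
      using on_curves[of e] by (auto simp: eps_def)
    have orbit: "\<forall>k<q. regular ((Tmap lam d f e ^^ k) (pe e))"
      "\<forall>k. 0 < k \<and> k < q \<longrightarrow> (Tmap lam d f e ^^ k) (pe e) \<noteq> pe e"
      using persists[of e] e by (auto simp: eps_def)
    show "sym_per_orbit lam d f e P q (pe e)"
      by (rule sym_per_orbit_of_symmetry_curves[OF cA cB curves jq q orbit])
    have "fst (pe e) \<in> {0..<1}" using regular_unit orbit(1) q by (metis funpow_0)
    then show "{p. fst p \<in> {0..<1} \<and> emb p \<in> UNIV \<and>
                 (\<exists>y. \<bar>y - yA\<bar> < eta \<and> p = (Tmap lam d f e ^^ nA) (gam lam cA y)) \<and>
                 (\<exists>y. \<bar>y - yB\<bar> < eta \<and> p = (Tmap lam d f e ^^ nB) (gam lam cB y))} = {pe e}"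
      using intersection[of e] e by (auto simp: eps_def)
  qed
  ultimately show ?thesis using eta by blast
qed

end

theorem mainTheorem12:
  fixes d :: nat and P :: "real set" and lam :: "nat \<Rightarrow> real \<Rightarrow> real" and f :: "real \<Rightarrow> real"
    and y0 yA yB :: real and q nA nB :: nat and J :: "real set" and cA cB :: curve
    and pstar :: "real \<times> real" and vA vB :: "real \<times> real"
  assumes d2: "d \<ge> 2"
    and P_int: "is_interval P" and P_open: "open P" and P_ne: "P \<noteq> {}"
    and lam_pos: "\<And>i y. i \<in> {1..d} \<Longrightarrow> y \<in> P \<Longrightarrow> lam i y > 0"
    and lam_sum: "\<And>y. y \<in> P \<Longrightarrow> (\<Sum>i\<in>{1..d}. lam i y) = 1"
    and lam_smooth: "\<And>i. i \<in> {1..d} \<Longrightarrow> smooth_on P (lam i)"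
    and f_smooth: "smooth_on UNIV f"
    and f_per: "\<And>x. f (x + 1) = f x"
    and f_odd: "\<And>x. f (- x) = - f x"
    and y0P: "y0 \<in> P"
    and Jper: "periodic_interval lam d y0 q J"
    and cA: "valid_curve d cA" and cB: "valid_curve d cB"
    and jq: "\<bar>jval cA nA - jval cB nB\<bar> = int q"
    and yAP: "yA \<in> P" and yBP: "yB \<in> P"
    and pstar_orb: "pstar \<in> {(Tmap lam d f 0 ^^ k) ((Inf J + Sup J) / 2, y0) | k. k < q}"
    and hitA: "(Tmap lam d f 0 ^^ nA) (gam lam cA yA) = pstar"
    and hitB: "(Tmap lam d f 0 ^^ nB) (gam lam cB yB) = pstar"
    and constA: "\<exists>r>0. \<forall>k<nA. \<exists>i\<in>{1..d}. \<forall>y eps. \<bar>y - yA\<bar> < r \<and> \<bar>eps\<bar> < r \<longrightarrow>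
                   fst ((Tmap lam d f eps ^^ k) (gam lam cA y))
                     \<in> elemJ lam i (snd ((Tmap lam d f eps ^^ k) (gam lam cA y)))"
    and constB: "\<exists>r>0. \<forall>k<nB. \<exists>i\<in>{1..d}. \<forall>y eps. \<bar>y - yB\<bar> < r \<and> \<bar>eps\<bar> < r \<longrightarrow>
                   fst ((Tmap lam d f eps ^^ k) (gam lam cB y))
                     \<in> elemJ lam i (snd ((Tmap lam d f eps ^^ k) (gam lam cB y)))"
    and derA: "((\<lambda>y. (Tmap lam d f 0 ^^ nA) (gam lam cA y)) has_vector_derivative vA) (at yA)"
    and derB: "((\<lambda>y. (Tmap lam d f 0 ^^ nB) (gam lam cB y)) has_vector_derivative vB) (at yB)"
    and indep: "fst vA * snd vB - snd vA * fst vB \<noteq> 0"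
  shows "\<exists>eps0>0. \<exists>V :: (complex \<times> real) set. open V \<and> emb pstar \<in> V \<and>
           (\<exists>eta>0. \<exists>pe :: real \<Rightarrow> real \<times> real.
              pe 0 = pstar \<and> continuous_on {-eps0<..<eps0} (emb \<circ> pe) \<and>
              (\<forall>eps. \<bar>eps\<bar> < eps0 \<longrightarrow>
                 {p. fst p \<in> {0..<1} \<and> emb p \<in> V \<and>
                     (\<exists>y. \<bar>y - yA\<bar> < eta \<and> p = (Tmap lam d f eps ^^ nA) (gam lam cA y)) \<and>
                     (\<exists>y. \<bar>y - yB\<bar> < eta \<and> p = (Tmap lam d f eps ^^ nB) (gam lam cB y))}
                   = {pe eps} \<and>
                 sym_per_orbit lam d f eps P q (pe eps)))"
proof -
  interpret symmetric_fiem lam d P f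
    by unfold_locales (use P_open lam_pos lam_sum lam_smooth f_smooth f_per f_odd in auto)
  obtain a b m where J: "per_int_props lam d y0 q {a..<b}"
    and pm: "pstar = (Tmap lam d f 0 ^^ m) ((a + b) / 2, y0)" and q: "0 < q"
    and reg: "\<And>k. regular ((Tmap lam d f 0 ^^ k) pstar)"
    and least: "\<And>k. 0 < k \<Longrightarrow> k < q \<Longrightarrow> (Tmap lam d f 0 ^^ k) pstar \<noteq> pstar"
    by (rule periodic_interval_orbit[OF y0P Jper pstar_orb]) (rule that; assumption)
  \<comment> \<open>Neither are is_interval P and P \<noteq> {}.\<close>
  have "(Tmap lam d f 0 ^^ nA) (gam lam cA yA) = (Tmap lam d f 0 ^^ m) ((a + b) / 2, y0)"
    using hitA pm by simp
  then have regA: "\<forall>k\<le>nA. regular ((Tmap lam d f 0 ^^ k) (gam lam cA yA))"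
    using curve_orbit_regular(2)[OF y0P J cA yAP] by blast
  have "(Tmap lam d f 0 ^^ nB) (gam lam cB yB) = (Tmap lam d f 0 ^^ m) ((a + b) / 2, y0)"
    using hitB pm by simp
  then have regB: "\<forall>k\<le>nB. regular ((Tmap lam d f 0 ^^ k) (gam lam cB yB))"
    using curve_orbit_regular(2)[OF y0P J cB yBP] by blast
  show ?thesis
    by (rule symmetric_periodic_orbit_continuation[OF cA cB yAP yBP jq q regA regB hitA hitB reg least
          derA derB indep])
qed

end
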